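(* Consider a POMDP with finite state space $\mathcal S$, finite observation space $\mathcal Y$, finite action space $\mathcal A$, transition kernel $P(s'\mid s,a)$, observation kernel $O(y'\mid s',a)$, reward $r\colon\mathcal S\times\mathcal A\to\mathbb R$, and discount $\gamma\in[0,1)$. Let $\mathcal Z$ be a finite set and $f\colon\mathcal Z\times\mathcal Y\times\mathcal A\to\mathcal Z$ a recurrent update, with agent state $Z_{t+1}=f(Z_t,Y_{t+1},A_t)$. Let the exploration policy $\pi_{\mathrm{expl}}\colon\mathcal Z\to\Delta(\mathcal A)$ (with $A_t\sim\pi_{\mathrm{expl}}(Z_t)$) be such that the Markov chain $\{(S_t,Y_t,Z_t,A_t)\}_{t\ge1}$ has a unique stationary distribution $\xi$ with $\xi(s,y,z,a)>0$ for all $(s,y,z,a)$. Consider the recurrent Q-learning iterates $$\widehat Q_{t+1}(Z_t,A_t)=\widehat Q_t(Z_t,A_t)+\alpha_t(Z_t,A_t)\big[R_t+\gamma\max_{\tilde a\in\mathcal A}\widehat Q_t(Z_{t+1},\tilde a)-\widehat Q_t(Z_t,A_t)\big],$$ where $R_t=r(S_t,A_t)$ and the learning rate is $\alpha_t(z,a)=\mathbb 1\{Z_t=z,A_t=a\}\big/\big(1+\sum_{\tau=0}^t\mathbb 1\{Z_\tau=z,A_\tau=a\}\big)$ (entries other than $(Z_t,A_t)$ are unchanged). Define $$r_\xi(z,a)=\sum_{s}r(s,a)\xi(s\mid z,a),\qquad P_\xi(z'\mid z,a)=\sum_s\xi(s\mid z,a)\sum_{s'}P(s'\mid s,a)\sum_{y'}O(y'\mid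 s',a)\mathbb 1\{z'=f(z,y',a)\},$$ and let $Q^\star_\xi$ be the unique fixed point of $$Q^\star_\xi(z,a)=r_\xi(z,a)+\gamma\sum_{z'\in\mathcal Z}P_\xi(z'\mid z,a)\max_{\tilde a\in\mathcal A}Q^\star_\xi(z',\tilde a).$$ Then $\widehat Q_t\to Q^\star_\xi$ almost surely. Therefore the greedy policies $\hat\pi_t(z)=\arg\max_a\widehat Q_t(z,a)$ converge to $\pi^\star_\xi(z)=\arg\max_aQ^\star_\xi(z,a)$ (arg-max ties broken by a fixed deterministic rule).
   Context: $\xi(s\mid z,a)=\xi(s,z,a)/\xi(z,a)$ denotes the conditional of the marginal of $\xi$ on $(s,z,a)$. $\Delta(\mathcal A)$ is the set of probability distributions on $\mathcal A$.
   Formalization: The greedy policies $\hat\pi_t(z)$ are claimed to converge to $\pi^\star_\xi(z)$ only at agent states z where $\arg\max_aQ^\star_\xi(z,a)$ consists of a single action, while $\widehat Q_t\to Q^\star_\xi$ almost surely holds without restriction. Apart from conventions, each condition added here is assumed in the paper as well or is needed for the statement above to hold. *)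

theory Defs
  imports "HOL-Probability.Probability"
begin

definition chain_kernel ::
  "('s \<Rightarrow> 'a \<Rightarrow> 's pmf) \<Rightarrow> ('s \<Rightarrow> 'a \<Rightarrow> 'y pmf) \<Rightarrow> ('z \<Rightarrow> 'y \<Rightarrow> 'a \<Rightarrow> 'z)
   \<Rightarrow> ('z \<Rightarrow> 'a pmf) \<Rightarrow> 's \<times> 'y \<times> 'z \<times> 'a \<Rightarrow> ('s \<times> 'y \<times> 'z \<times> 'a) pmf" where
  "chain_kernel P Obs f pol = (\<lambda>(s, y, z, a).
     bind_pmf (P s a) (\<lambda>s'. bind_pmf (Obs s' a) (\<lambda>y'.
       map_pmf (\<lambda>a'. (s', y', f z y' a, a')) (pol (f z y' a)))))"

definition cond_s :: "('s::finite \<times> 'y::finite \<times> 'z \<times> 'a) pmf \<Rightarrow> 's \<Rightarrow> 'z \<Rightarrow> 'a \<Rightarrow> real" where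
  "cond_s \<xi> s z a =
     (\<Sum>y\<in>UNIV. pmf \<xi> (s, y, z, a)) / (\<Sum>s'\<in>UNIV. \<Sum>y\<in>UNIV. pmf \<xi> (s', y, z, a))"

definition r_xi :: "('s::finite \<Rightarrow> 'a \<Rightarrow> real) \<Rightarrow> ('s \<times> 'y::finite \<times> 'z \<times> 'a) pmf \<Rightarrow> 'z \<Rightarrow> 'a \<Rightarrow> real" where
  "r_xi r \<xi> z a = (\<Sum>s\<in>UNIV. r s a * cond_s \<xi> s z a)"

definition P_xi ::
  "('s::finite \<Rightarrow> 'a \<Rightarrow> 's pmf) \<Rightarrow> ('s \<Rightarrow> 'a \<Rightarrow> 'y::finite pmf) \<Rightarrow> ('z \<Rightarrow> 'y \<Rightarrow> 'a \<Rightarrow> 'z)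
   \<Rightarrow> ('s \<times> 'y \<times> 'z \<times> 'a) pmf \<Rightarrow> 'z \<Rightarrow> 'z \<Rightarrow> 'a \<Rightarrow> real" where
  "P_xi P Obs f \<xi> z' z a =
     (\<Sum>s\<in>UNIV. cond_s \<xi> s z a * (\<Sum>s'\<in>UNIV. pmf (P s a) s' *
        (\<Sum>y'\<in>UNIV. pmf (Obs s' a) y' * (if z' = f z y' a then 1 else 0))))"

definition max_q :: "('z \<Rightarrow> 'a::finite \<Rightarrow> real) \<Rightarrow> 'z \<Rightarrow> real" where
  "max_q Q z = Max (range (Q z))"

definition trS :: "(nat \<Rightarrow> 's \<times> 'y \<times> 'z \<times> 'a) \<Rightarrow> nat \<Rightarrow> 's" where
  "trS x t = fst (x t)"
definition trZ :: "(nat \<Rightarrow> 's \<times> 'y \<times> 'z \<times> 'a) \<Rightarrow> nat \<Rightarrow> 'z" where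
  "trZ x t = fst (snd (snd (x t)))"
definition trA :: "(nat \<Rightarrow> 's \<times> 'y \<times> 'z \<times> 'a) \<Rightarrow> nat \<Rightarrow> 'a" where
  "trA x t = snd (snd (snd (x t)))"

definition lrate :: "(nat \<Rightarrow> 's \<times> 'y \<times> 'z \<times> 'a) \<Rightarrow> nat \<Rightarrow> 'z \<Rightarrow> 'a \<Rightarrow> real" where
  "lrate x t z a =
     (if trZ x t = z \<and> trA x t = a then 1 else 0) /
     (1 + (\<Sum>\<tau>\<in>{0..t}. if trZ x \<tau> = z \<and> trA x \<tau> = a then 1 else 0))"

text \<open>Recurrent Q-learning iterates along a trajectory x, from initial table Q0.
  Since alpha_t vanishes off (Z_t, A_t), other entries are unchanged.\<close>
primrec qlearn ::
  "('s \<Rightarrow> 'a::finite \<Rightarrow> real) \<Rightarrow> real \<Rightarrow> ('z \<Rightarrow> 'a \<Rightarrow> real) \<Rightarrow> (nat \<Rightarrow> 's \<times> 'y \<times> 'z \<times> 'a)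
   \<Rightarrow> nat \<Rightarrow> 'z \<Rightarrow> 'a \<Rightarrow> real" where
  "qlearn r \<gamma> Q0 x 0 = Q0"
| "qlearn r \<gamma> Q0 x (Suc t) =
     (let Q = qlearn r \<gamma> Q0 x t in
      (\<lambda>z a. Q z a + lrate x t z a *
         (r (trS x t) (trA x t) + \<gamma> * max_q Q (trZ x (Suc t)) - Q z a)))"

definition greedy :: "('a set \<Rightarrow> 'a) \<Rightarrow> ('z \<Rightarrow> 'a::finite \<Rightarrow> real) \<Rightarrow> 'z \<Rightarrow> 'a" where
  "greedy sel Q z = sel {a. Q z a = max_q Q z}"

end

theory Submission
  imports Defs
begin

text \<open>Centring the indicator of a transition \<open>x0 \<rightarrow> y0\<close> by \<open>K x0 y0\<close> yields bounded martingale
  differences, so a fourth-moment estimate and Borel--Cantelli show that almost surely the empirical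
  transition frequencies of the chain are asymptotically those of its empirical state frequencies
  followed by one step of \<open>K\<close>. Every limit point of the empirical state frequencies is therefore a
  stationary distribution, hence \<open>\<xi>\<close>, and ergodic averages of functions of consecutive states converge
  to their \<open>\<xi>\<close>-means. With the harmonic learning rate \<open>Q_t(z, a)\<close> is the running average of the
  targets observed at \<open>(z, a)\<close>; by the ergodic limits, the empirical rewards and agent-state transitions at
  \<open>(z, a)\<close> converge to \<open>r_xi\<close> and \<open>P_xi\<close>, so an asymptotic error bound \<open>D\<close> improves to \<open>\<gamma> D\<close>, and
  iterating drives the error to zero. Greedy policies then agree once the maximiser of \<open>Qs z\<close> is unique.\<close>

section \<open>A strong law for martingale differences of a finite Markov chain\<close>

lemma sum_PiE_atMost_Suc:
  fixes F :: "(nat \<Rightarrow> 'x::finite) \<Rightarrow> real"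
  shows "(\<Sum>xs\<in>PiE {..Suc n} (\<lambda>_. UNIV). F xs) =
         (\<Sum>xs\<in>PiE {..n} (\<lambda>_. UNIV). \<Sum>y\<in>UNIV. F (xs(Suc n := y)))"
proof -
  have "(\<Sum>xs\<in>PiE {..Suc n} (\<lambda>_. UNIV). F xs) =
        (\<Sum>p\<in>UNIV \<times> PiE {..n} (\<lambda>_. UNIV). F ((\<lambda>(y, g). g(Suc n := y)) p))"
    unfolding atMost_Suc PiE_insert_eq
    by (subst sum.reindex) (auto intro!: inj_combinator)
  also have "\<dots> = (\<Sum>y\<in>UNIV. \<Sum>xs\<in>PiE {..n} (\<lambda>_. UNIV). F (xs(Suc n := y)))"
    by (simp add: sum.cartesian_product case_prod_beta)
  finally show ?thesis
    by (simp add: sum.swap[of _ UNIV])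
qed

locale finite_markov_chain = prob_space M for M :: "'m measure" +
  fixes X :: "nat \<Rightarrow> 'm \<Rightarrow> 'x::finite" and K :: "'x \<Rightarrow> 'x pmf" and \<mu>0 :: "'x pmf"
  assumes measurable_X[measurable]: "\<And>i. X i \<in> measurable M (count_space UNIV)"
    and measure_cylinder_eq: "\<And>n xs. measure M {\<omega>\<in>space M. \<forall>i\<le>n. X i \<omega> = xs i} =
      pmf \<mu>0 (xs 0) * (\<Prod>i<n. pmf (K (xs i)) (xs (Suc i)))"
begin

definition cylinder :: "nat \<Rightarrow> (nat \<Rightarrow> 'x) \<Rightarrow> 'm set" where
  "cylinder n xs = {\<omega>\<in>space M. \<forall>i\<le>n. X i \<omega> = xs i}"

definition path_prob :: "nat \<Rightarrow> (nat \<Rightarrow> 'x) \<Rightarrow> real" where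
  "path_prob n xs = pmf \<mu>0 (xs 0) * (\<Prod>i<n. pmf (K (xs i)) (xs (Suc i)))"

lemma cylinder_in_sets[measurable]: "cylinder n xs \<in> sets M"
  unfolding cylinder_def by measurable

lemma path_prob_fun_upd_Suc:
  "xs \<in> PiE {..n} (\<lambda>_. UNIV) \<Longrightarrow> path_prob (Suc n) (xs(Suc n := y)) = path_prob n xs * pmf (K (xs n)) y"
  unfolding path_prob_def by (auto intro!: prod.cong simp: prod.lessThan_Suc)

lemma path_fun_eq_sum_cylinders:
  fixes G :: "(nat \<Rightarrow> 'x) \<Rightarrow> real"
  assumes G: "\<And>xs ys. (\<forall>i\<le>n. xs i = ys i) \<Longrightarrow> G xs = G ys" and \<omega>: "\<omega> \<in> space M"
  shows "G (\<lambda>i. X i \<omega>) = (\<Sum>xs\<in>PiE {..n} (\<lambda>_. UNIV). G xs * indicator (cylinder n xs) \<omega>)"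
proof -
  let ?x = "restrict (\<lambda>i. X i \<omega>) {..n}"
  have "\<omega> \<in> cylinder n xs \<longleftrightarrow> xs = ?x" if "xs \<in> PiE {..n} (\<lambda>_. UNIV)" for xs
    using that \<omega> unfolding cylinder_def by (auto simp: PiE_def extensional_def fun_eq_iff)
  then have "(\<Sum>xs\<in>PiE {..n} (\<lambda>_. UNIV). G xs * indicator (cylinder n xs) \<omega>) =
             (\<Sum>xs\<in>PiE {..n} (\<lambda>_. UNIV). if xs = ?x then G xs else 0)"
    by (intro sum.cong) (auto simp: indicator_def)
  also have "\<dots> = G ?x"
    by (subst sum.delta) (auto simp: finite_PiE)
  also have "\<dots> = G (\<lambda>i. X i \<omega>)"
    by (rule G) auto
  finally show ?thesis by simp
qed

lemma integrable_path_fun: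
  fixes G :: "(nat \<Rightarrow> 'x) \<Rightarrow> real"
  assumes G: "\<And>xs ys. (\<forall>i\<le>n. xs i = ys i) \<Longrightarrow> G xs = G ys"
  shows "integrable M (\<lambda>\<omega>. G (\<lambda>i. X i \<omega>))"
proof -
  have "integrable M (\<lambda>\<omega>. \<Sum>xs\<in>PiE {..n} (\<lambda>_. UNIV). G xs * indicator (cylinder n xs) \<omega>)"
    by (intro Bochner_Integration.integrable_sum integrable_mult_right integrable_real_indicator)
       (simp_all add: less_top[symmetric])
  moreover have "integrable M (\<lambda>\<omega>. G (\<lambda>i. X i \<omega>)) \<longleftrightarrow>
      integrable M (\<lambda>\<omega>. \<Sum>xs\<in>PiE {..n} (\<lambda>_. UNIV). G xs * indicator (cylinder n xs) \<omega>)"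
    by (rule Bochner_Integration.integrable_cong) (auto intro: path_fun_eq_sum_cylinders[OF G])
  ultimately show ?thesis by simp
qed

lemma integral_path_fun:
  fixes G :: "(nat \<Rightarrow> 'x) \<Rightarrow> real"
  assumes G: "\<And>xs ys. (\<forall>i\<le>n. xs i = ys i) \<Longrightarrow> G xs = G ys"
  shows "(\<integral>\<omega>. G (\<lambda>i. X i \<omega>) \<partial>M) = (\<Sum>xs\<in>PiE {..n} (\<lambda>_. UNIV). G xs * path_prob n xs)"
proof -
  have "(\<integral>\<omega>. G (\<lambda>i. X i \<omega>) \<partial>M) =
        (\<integral>\<omega>. (\<Sum>xs\<in>PiE {..n} (\<lambda>_. UNIV). G xs * indicator (cylinder n xs) \<omega>) \<partial>M)"
    by (rule Bochner_Integration.integral_cong) (auto intro: path_fun_eq_sum_cylinders[OF G])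
  also have "\<dots> = (\<Sum>xs\<in>PiE {..n} (\<lambda>_. UNIV). G xs * measure M (cylinder n xs))"
    by (subst Bochner_Integration.integral_sum)
       (auto intro!: integrable_mult_right integrable_real_indicator simp: less_top[symmetric])
  finally show ?thesis
    by (simp add: cylinder_def path_prob_def measure_cylinder_eq)
qed

lemma integral_path_fun_mult_increment:
  fixes G :: "(nat \<Rightarrow> 'x) \<Rightarrow> real"
  assumes G: "\<And>xs ys. (\<forall>i\<le>n. xs i = ys i) \<Longrightarrow> G xs = G ys"
    and centered: "\<And>x. (\<Sum>y\<in>UNIV. pmf (K x) y * \<psi> x y) = 0"
  shows "(\<integral>\<omega>. G (\<lambda>i. X i \<omega>) * \<psi> (X n \<omega>) (X (Suc n) \<omega>) \<partial>M) = 0"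
proof -
  have G': "G xs * \<psi> (xs n) (xs (Suc n)) = G ys * \<psi> (ys n) (ys (Suc n))"
    if "\<forall>i\<le>Suc n. xs i = ys i" for xs ys
    using that G[of xs ys] by auto
  have "(\<integral>\<omega>. G (\<lambda>i. X i \<omega>) * \<psi> (X n \<omega>) (X (Suc n) \<omega>) \<partial>M) =
        (\<Sum>xs\<in>PiE {..Suc n} (\<lambda>_. UNIV). G xs * \<psi> (xs n) (xs (Suc n)) * path_prob (Suc n) xs)"
    using integral_path_fun[of "Suc n" "\<lambda>xs. G xs * \<psi> (xs n) (xs (Suc n))", OF G'] by simp
  also have "\<dots> = (\<Sum>xs\<in>PiE {..n} (\<lambda>_. UNIV). \<Sum>y\<in>UNIV.
                    G (xs(Suc n := y)) * \<psi> (xs n) y * path_prob (Suc n) (xs(Suc n := y)))"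
    by (simp add: sum_PiE_atMost_Suc)
  also have "\<dots> = (\<Sum>xs\<in>PiE {..n} (\<lambda>_. UNIV).
                    G xs * path_prob n xs * (\<Sum>y\<in>UNIV. pmf (K (xs n)) y * \<psi> (xs n) y))"
  proof (rule sum.cong[OF refl])
    fix xs :: "nat \<Rightarrow> 'x" assume xs: "xs \<in> PiE {..n} (\<lambda>_. UNIV)"
    have "G (xs(Suc n := y)) = G xs" for y
      by (rule G) auto
    then show "(\<Sum>y\<in>UNIV. G (xs(Suc n := y)) * \<psi> (xs n) y * path_prob (Suc n) (xs(Suc n := y))) =
               G xs * path_prob n xs * (\<Sum>y\<in>UNIV. pmf (K (xs n)) y * \<psi> (xs n) y)"
      by (simp add: path_prob_fun_upd_Suc[OF xs] sum_distrib_left mult_ac)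
  qed
  also have "\<dots> = 0"
    by (simp add: centered)
  finally show ?thesis .
qed

definition increment_sum :: "('x \<Rightarrow> 'x \<Rightarrow> real) \<Rightarrow> nat \<Rightarrow> 'm \<Rightarrow> real" where
  "increment_sum \<psi> n \<omega> = (\<Sum>\<tau><n. \<psi> (X \<tau> \<omega>) (X (Suc \<tau>) \<omega>))"

lemma increment_sum_Suc:
  "increment_sum \<psi> (Suc n) \<omega> = increment_sum \<psi> n \<omega> + \<psi> (X n \<omega>) (X (Suc n) \<omega>)"
  unfolding increment_sum_def by simp

lemma integrable_increment_sum_power_mult:
  "integrable M (\<lambda>\<omega>. increment_sum \<psi> n \<omega> ^ k * \<psi> (X n \<omega>) (X (Suc n) \<omega>) ^ j)"
  using integrable_path_fun[of "Suc n" "\<lambda>xs. (\<Sum>\<tau><n. \<psi> (xs \<tau>) (xs (Suc \<tau>))) ^ k * \<psi> (xs n) (xs (Suc n)) ^ j"]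
  unfolding increment_sum_def by (auto intro!: sum.cong)

lemma integrable_increment_sum_power: "integrable M (\<lambda>\<omega>. increment_sum \<psi> n \<omega> ^ k)"
  using integrable_increment_sum_power_mult[of \<psi> n k 0] by simp

lemma borel_measurable_increment_sum[measurable]: "increment_sum \<psi> n \<in> borel_measurable M"
  using integrable_increment_sum_power[of \<psi> n 1] by (simp add: borel_measurable_integrable)

context
  fixes \<psi> :: "'x \<Rightarrow> 'x \<Rightarrow> real" and c :: real
  assumes centered: "\<And>x. (\<Sum>y\<in>UNIV. pmf (K x) y * \<psi> x y) = 0"
    and bounded: "\<And>x y. \<bar>\<psi> x y\<bar> \<le> c"
begin

lemma increment_bound_nonneg: "0 \<le> c"
  using bounded[of undefined undefined] by simp

lemma increment_square_le: "\<psi> x y ^ 2 \<le> c\<^sup>2"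
  using bounded[of x y] increment_bound_nonneg by (simp add: abs_le_square_iff[symmetric])

lemma integral_increment_sum_power_mult_increment:
  "(\<integral>\<omega>. increment_sum \<psi> n \<omega> ^ k * \<psi> (X n \<omega>) (X (Suc n) \<omega>) \<partial>M) = 0"
  using integral_path_fun_mult_increment[of n "\<lambda>xs. (\<Sum>\<tau><n. \<psi> (xs \<tau>) (xs (Suc \<tau>))) ^ k", OF _ centered]
  unfolding increment_sum_def by (auto intro!: sum.cong)

lemma abs_increment_sum_le: "\<bar>increment_sum \<psi> n \<omega>\<bar> \<le> n * c"
proof -
  have "\<bar>increment_sum \<psi> n \<omega>\<bar> \<le> (\<Sum>\<tau><n. \<bar>\<psi> (X \<tau> \<omega>) (X (Suc \<tau>) \<omega>)\<bar>)"
    unfolding increment_sum_def by (rule sum_abs)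
  also have "\<dots> \<le> (\<Sum>\<tau><n. c)"
    by (intro sum_mono bounded)
  finally show ?thesis by simp
qed

lemma integral_increment_sum_power_mult_le:
  assumes "\<And>\<omega>. increment_sum \<psi> n \<omega> ^ k * \<psi> (X n \<omega>) (X (Suc n) \<omega>) ^ j \<le> b"
  shows "(\<integral>\<omega>. increment_sum \<psi> n \<omega> ^ k * \<psi> (X n \<omega>) (X (Suc n) \<omega>) ^ j \<partial>M) \<le> b"
proof -
  have "(\<integral>\<omega>. increment_sum \<psi> n \<omega> ^ k * \<psi> (X n \<omega>) (X (Suc n) \<omega>) ^ j \<partial>M) \<le> (\<integral>\<omega>. b \<partial>M)"
    by (intro integral_mono integrable_increment_sum_power_mult assms) simp
  then show ?thesis
    by (simp add: prob_space)
qed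

lemma second_moment_increment_sum: "(\<integral>\<omega>. increment_sum \<psi> n \<omega> ^ 2 \<partial>M) \<le> n * c\<^sup>2"
proof (induction n)
  case 0
  then show ?case by (simp add: increment_sum_def)
next
  case (Suc n)
  let ?S = "increment_sum \<psi> n" and ?D = "\<lambda>\<omega>. \<psi> (X n \<omega>) (X (Suc n) \<omega>)"
  have expand: "increment_sum \<psi> (Suc n) \<omega> ^ 2 =
      ?S \<omega> ^ 2 + (2 * (?S \<omega> ^ 1 * ?D \<omega>) + ?S \<omega> ^ 0 * ?D \<omega> ^ 2)" for \<omega>
    by (simp add: increment_sum_Suc power2_eq_square algebra_simps)
  have "integrable M (\<lambda>\<omega>. ?S \<omega> ^ 1 * ?D \<omega>)" "integrable M (\<lambda>\<omega>. ?S \<omega> ^ 0 * ?D \<omega> ^ 2)"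
    using integrable_increment_sum_power_mult[of \<psi> n 1 1] integrable_increment_sum_power_mult[of \<psi> n 0 2]
    by simp_all
  then have "(\<integral>\<omega>. increment_sum \<psi> (Suc n) \<omega> ^ 2 \<partial>M) =
      (\<integral>\<omega>. ?S \<omega> ^ 2 \<partial>M) + (2 * (\<integral>\<omega>. ?S \<omega> ^ 1 * ?D \<omega> \<partial>M) + (\<integral>\<omega>. ?S \<omega> ^ 0 * ?D \<omega> ^ 2 \<partial>M))"
    unfolding expand using integrable_increment_sum_power
    by (simp add: Bochner_Integration.integral_add Bochner_Integration.integral_mult_right
        del: power_one_right power_0)
  also have "(\<integral>\<omega>. ?S \<omega> ^ 1 * ?D \<omega> \<partial>M) = 0"
    by (rule integral_increment_sum_power_mult_increment)
  also have "(\<integral>\<omega>. ?S \<omega> ^ 0 * ?D \<omega> ^ 2 \<partial>M) \<le> c\<^sup>2"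
    by (intro integral_increment_sum_power_mult_le) (simp add: increment_square_le)
  finally show ?case
    using Suc.IH by (simp add: algebra_simps)
qed

lemma integral_increment_sum_square_mult_square_le:
  "(\<integral>\<omega>. increment_sum \<psi> n \<omega> ^ 2 * \<psi> (X n \<omega>) (X (Suc n) \<omega>) ^ 2 \<partial>M) \<le> n * c ^ 4"
proof -
  have "(\<integral>\<omega>. increment_sum \<psi> n \<omega> ^ 2 * \<psi> (X n \<omega>) (X (Suc n) \<omega>) ^ 2 \<partial>M) \<le>
        (\<integral>\<omega>. c\<^sup>2 * increment_sum \<psi> n \<omega> ^ 2 \<partial>M)"
  proof (rule integral_mono[OF integrable_increment_sum_power_mult])
    fix \<omega>
    show "increment_sum \<psi> n \<omega> ^ 2 * \<psi> (X n \<omega>) (X (Suc n) \<omega>) ^ 2 \<le> c\<^sup>2 * increment_sum \<psi> n \<omega> ^ 2"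
      using mult_left_mono[OF increment_square_le zero_le_power2] by (metis mult.commute)
  qed (simp add: integrable_increment_sum_power)
  also have "\<dots> \<le> c\<^sup>2 * (n * c\<^sup>2)"
    by (simp add: mult_left_mono second_moment_increment_sum)
  finally show ?thesis
    by (simp add: power4_eq_xxxx power2_eq_square algebra_simps)
qed

lemma fourth_moment_increment_sum_Suc:
  "(\<integral>\<omega>. increment_sum \<psi> (Suc n) \<omega> ^ 4 \<partial>M) \<le> (\<integral>\<omega>. increment_sum \<psi> n \<omega> ^ 4 \<partial>M) + (10 * real n + 1) * c ^ 4"
proof -
  note c = increment_bound_nonneg
  let ?S = "increment_sum \<psi> n" and ?D = "\<lambda>\<omega>. \<psi> (X n \<omega>) (X (Suc n) \<omega>)"
  define F where "F k j = (\<lambda>\<omega>. ?S \<omega> ^ k * ?D \<omega> ^ j)" for k j :: nat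
  have "increment_sum \<psi> (Suc n) \<omega> ^ 4 =
        F 4 0 \<omega> + (4 * F 3 1 \<omega> + (6 * F 2 2 \<omega> + (4 * F 1 3 \<omega> + F 0 4 \<omega>)))" for \<omega>
    unfolding F_def
    by (simp add: increment_sum_Suc power2_eq_square power3_eq_cube power4_eq_xxxx algebra_simps)
  moreover have "integrable M (F k j)" for k j
    unfolding F_def by (rule integrable_increment_sum_power_mult)
  ultimately have expand: "(\<integral>\<omega>. increment_sum \<psi> (Suc n) \<omega> ^ 4 \<partial>M) =
      integral\<^sup>L M (F 4 0) + (4 * integral\<^sup>L M (F 3 1) + (6 * integral\<^sup>L M (F 2 2) +
      (4 * integral\<^sup>L M (F 1 3) + integral\<^sup>L M (F 0 4))))"
    by (simp add: Bochner_Integration.integral_add Bochner_Integration.integral_mult_right)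
  have "integral\<^sup>L M (F 4 0) = (\<integral>\<omega>. ?S \<omega> ^ 4 \<partial>M)"
    unfolding F_def by simp
  moreover have "integral\<^sup>L M (F 3 1) = 0"
    unfolding F_def using integral_increment_sum_power_mult_increment[of n 3] by simp
  moreover have "integral\<^sup>L M (F 2 2) \<le> n * c ^ 4"
    unfolding F_def by (rule integral_increment_sum_square_mult_square_le)
  moreover have "integral\<^sup>L M (F 1 3) \<le> n * c ^ 4"
    unfolding F_def
  proof (rule integral_increment_sum_power_mult_le)
    fix \<omega>
    have "?S \<omega> ^ 1 * ?D \<omega> ^ 3 \<le> \<bar>?S \<omega>\<bar> * \<bar>?D \<omega>\<bar> ^ 3"
      by (metis abs_ge_self abs_mult power_abs power_one_right)
    also have "\<dots> \<le> (n * c) * c ^ 3"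
      by (intro mult_mono power_mono abs_increment_sum_le bounded) (use c in auto)
    finally show "?S \<omega> ^ 1 * ?D \<omega> ^ 3 \<le> n * c ^ 4"
      by (simp add: power4_eq_xxxx power3_eq_cube algebra_simps)
  qed
  moreover have "integral\<^sup>L M (F 0 4) \<le> c ^ 4"
    unfolding F_def
  proof (rule integral_increment_sum_power_mult_le)
    fix \<omega>
    have "?D \<omega> ^ 4 = \<bar>?D \<omega>\<bar> ^ 4"
      by (simp add: power_even_abs)
    also have "\<dots> \<le> c ^ 4"
      by (intro power_mono bounded) simp
    finally show "?S \<omega> ^ 0 * ?D \<omega> ^ 4 \<le> c ^ 4" by simp
  qed
  ultimately show ?thesis
    unfolding expand by (simp add: distrib_right)
qed

lemma fourth_moment_increment_sum: "(\<integral>\<omega>. increment_sum \<psi> n \<omega> ^ 4 \<partial>M) \<le> 11 * c ^ 4 * (real n)\<^sup>2"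
proof (induction n)
  case 0
  then show ?case by (simp add: increment_sum_def)
next
  case (Suc n)
  have "0 \<le> c ^ 4"
    using increment_bound_nonneg by simp
  then have "11 * c ^ 4 * (real n)\<^sup>2 + (10 * real n + 1) * c ^ 4 \<le> 11 * c ^ 4 * (real (Suc n))\<^sup>2"
    by (simp add: power2_eq_square algebra_simps)
  then show ?case
    using Suc.IH fourth_moment_increment_sum_Suc[of n] by linarith
qed

lemma prob_increment_sum_power_4_ge_le:
  fixes e :: real
  assumes e: "0 < e" and n: "0 < n"
  shows "measure M {\<omega>\<in>space M. (e * n) ^ 4 \<le> increment_sum \<psi> n \<omega> ^ 4} \<le> (11 * c ^ 4 / e ^ 4) * inverse ((real n)\<^sup>2)"
proof -
  have "measure M {\<omega>\<in>space M. (e * n) ^ 4 \<le> increment_sum \<psi> n \<omega> ^ 4} \<le>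
        (\<integral>\<omega>. increment_sum \<psi> n \<omega> ^ 4 \<partial>M) / (e * n) ^ 4"
    by (rule integral_Markov_inequality_measure[where A="space M"])
       (use e n in \<open>auto intro: integrable_increment_sum_power\<close>)
  also have "\<dots> \<le> 11 * c ^ 4 * (real n)\<^sup>2 / (e * n) ^ 4"
    using e n by (intro divide_right_mono fourth_moment_increment_sum) simp
  also have "\<dots> = (11 * c ^ 4 / e ^ 4) * inverse ((real n)\<^sup>2)"
    using e n by (simp add: field_simps power_mult_distrib power2_eq_square power4_eq_xxxx)
  finally show ?thesis .
qed

lemma AE_eventually_abs_increment_sum_less:
  fixes e :: real
  assumes e: "0 < e"
  shows "AE \<omega> in M. \<forall>\<^sub>F n in sequentially. \<bar>increment_sum \<psi> (Suc n) \<omega>\<bar> < e * Suc n"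
proof -
  define A where "A n = {\<omega>\<in>space M. (e * Suc n) ^ 4 \<le> increment_sum \<psi> (Suc n) \<omega> ^ 4}" for n
  have A_sets: "A n \<in> sets M" for n
    unfolding A_def by measurable
  have tail: "measure M (A n) \<le> (11 * c ^ 4 / e ^ 4) * inverse ((real (Suc n))\<^sup>2)" for n
    unfolding A_def using prob_increment_sum_power_4_ge_le[OF e, of "Suc n"] by simp
  have inverse_square_summable: "summable (\<lambda>n. inverse ((real (Suc n))\<^sup>2))"
    using inverse_power_summable[of 2, where 'a=real] summable_Suc_iff[of "\<lambda>n. inverse ((real n)\<^sup>2)"]
    by simp
  have summable_tail: "summable (\<lambda>n. measure M (A n))"
    by (rule summable_comparison_test[OF _ summable_mult[OF inverse_square_summable, of "11 * c ^ 4 / e ^ 4"]])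
       (use tail in auto)
  have "AE \<omega> in M. \<forall>\<^sub>F n in sequentially. \<omega> \<in> space M - A n"
    by (rule borel_cantelli_AE1[OF A_sets _ summable_tail]) (simp add: less_top[symmetric])
  then show ?thesis
  proof (rule AE_mp, intro AE_I2 impI)
    fix \<omega> assume \<omega>: "\<omega> \<in> space M" and ev: "\<forall>\<^sub>F n in sequentially. \<omega> \<in> space M - A n"
    show "\<forall>\<^sub>F n in sequentially. \<bar>increment_sum \<psi> (Suc n) \<omega>\<bar> < e * Suc n"
      using ev
    proof (rule eventually_mono)
      fix n assume "\<omega> \<in> space M - A n"
      then have "\<bar>increment_sum \<psi> (Suc n) \<omega>\<bar> ^ 4 < (e * Suc n) ^ 4"
        using \<omega> by (simp add: A_def power_even_abs)
      then show "\<bar>increment_sum \<psi> (Suc n) \<omega>\<bar> < e * Suc n"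
        by (rule power_less_imp_less_base) (use e in simp)
    qed
  qed
qed

lemma AE_increment_average_tendsto_0: "AE \<omega> in M. (\<lambda>n. increment_sum \<psi> n \<omega> / n) \<longlonglongrightarrow> 0"
proof -
  have "AE \<omega> in M. \<forall>k::nat. \<forall>\<^sub>F n in sequentially. \<bar>increment_sum \<psi> (Suc n) \<omega>\<bar> < inverse (real (Suc k)) * Suc n"
    by (subst AE_all_countable) (auto intro!: AE_eventually_abs_increment_sum_less simp del: of_nat_Suc)
  then show ?thesis
  proof (rule AE_mp, intro AE_I2 impI)
    fix \<omega>
    assume small: "\<forall>k::nat. \<forall>\<^sub>F n in sequentially. \<bar>increment_sum \<psi> (Suc n) \<omega>\<bar> < inverse (real (Suc k)) * Suc n"
    show "(\<lambda>n. increment_sum \<psi> n \<omega> / n) \<longlonglongrightarrow> 0"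
    proof (rule LIMSEQ_I)
      fix \<epsilon> :: real assume "0 < \<epsilon>"
      then obtain k where k: "inverse (real (Suc k)) < \<epsilon>"
        using reals_Archimedean by blast
      obtain N where N: "\<And>n. N \<le> n \<Longrightarrow> \<bar>increment_sum \<psi> (Suc n) \<omega>\<bar> < inverse (real (Suc k)) * Suc n"
        using small[rule_format, of k] unfolding eventually_sequentially by blast
      have "norm (increment_sum \<psi> n \<omega> / n - 0) < \<epsilon>" if "Suc N \<le> n" for n
      proof -
        obtain m where "n = Suc m" "N \<le> m"
          using \<open>Suc N \<le> n\<close> by (cases n) auto
        then have "\<bar>increment_sum \<psi> n \<omega>\<bar> / n < inverse (Suc k)"
          using N by (simp add: divide_less_eq)
        then show ?thesis
          using k by simp
      qed
      then show "\<exists>N. \<forall>n\<ge>N. norm (increment_sum \<psi> n \<omega> / n - 0) < \<epsilon>"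
        by blast
    qed
  qed
qed

end

end

section \<open>Empirical transition frequencies\<close>

lemma tendsto_of_bounded_unique_limit_point:
  fixes a :: "nat \<Rightarrow> 'v::heine_borel"
  assumes bounded: "bounded (range a)"
    and unique: "\<And>r l. strict_mono r \<Longrightarrow> (a \<circ> r) \<longlonglongrightarrow> l \<Longrightarrow> l = L"
  shows "a \<longlonglongrightarrow> L"
proof (rule metric_LIMSEQ_I, rule ccontr)
  fix e :: real assume e: "0 < e" and "\<not> (\<exists>N. \<forall>n\<ge>N. dist (a n) L < e)"
  then have "infinite {n. e \<le> dist (a n) L}"
    unfolding infinite_nat_iff_unbounded_le by (auto simp: not_less)
  then obtain r0 :: "nat \<Rightarrow> nat" where r0: "strict_mono r0" "\<And>n. e \<le> dist (a (r0 n)) L"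
    using infinite_enumerate by blast
  have "bounded (range (a \<circ> r0))"
    using bounded by (rule bounded_subset) auto
  then obtain l r1 where r1: "strict_mono r1" and lim: "((a \<circ> r0) \<circ> r1) \<longlonglongrightarrow> l"
    using bounded_imp_convergent_subsequence by blast
  have "l = L"
    using lim by (intro unique[of "r0 \<circ> r1"]) (simp_all add: r0 r1 strict_mono_o o_assoc)
  then have "(\<lambda>k. dist (a (r0 (r1 k))) L) \<longlonglongrightarrow> 0"
    using tendsto_dist[OF lim tendsto_const[of L]] by (simp add: o_def)
  moreover have "e \<le> dist (a (r0 (r1 k))) L" for k
    by (rule r0(2))
  ultimately have "e \<le> 0"
    by (intro LIMSEQ_le_const) auto
  then show False
    using e by simp
qed

definition transition_innovation :: "('x \<Rightarrow> 'x pmf) \<Rightarrow> 'x \<Rightarrow> 'x \<Rightarrow> 'x \<Rightarrow> 'x \<Rightarrow> real" where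
  "transition_innovation K x0 y0 x y = (if x = x0 then (if y = y0 then 1 else 0) - pmf (K x0) y0 else 0)"

lemma transition_innovation_centered:
  fixes K :: "'x::finite \<Rightarrow> 'x pmf"
  shows "(\<Sum>y\<in>UNIV. pmf (K x) y * transition_innovation K x0 y0 x y) = 0"
proof (cases "x = x0")
  case True
  then have "pmf (K x) y * transition_innovation K x0 y0 x y =
             (if y = y0 then pmf (K x0) y0 else 0) - pmf (K x0) y * pmf (K x0) y0" for y
    by (simp add: transition_innovation_def algebra_simps)
  then have "(\<Sum>y\<in>UNIV. pmf (K x) y * transition_innovation K x0 y0 x y) =
             (\<Sum>y\<in>UNIV. if y = y0 then pmf (K x0) y0 else 0) - (\<Sum>y\<in>UNIV. pmf (K x0) y) * pmf (K x0) y0"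
    by (simp add: sum_subtractf sum_distrib_right)
  also have "(\<Sum>y\<in>UNIV. pmf (K x0) y) = 1"
    by (rule sum_pmf_eq_1) auto
  finally show ?thesis by simp
qed (simp add: transition_innovation_def)

lemma abs_transition_innovation_le_1: "\<bar>transition_innovation K x0 y0 x y\<bar> \<le> 1"
  unfolding transition_innovation_def using pmf_le_1[of "K x0" y0] pmf_nonneg[of "K x0" y0] by auto

definition visit_freq :: "(nat \<Rightarrow> 'x) \<Rightarrow> nat \<Rightarrow> 'x \<Rightarrow> real" where
  "visit_freq x n y = (\<Sum>\<tau><n. if x \<tau> = y then 1 else 0) / n"

definition transition_freq :: "(nat \<Rightarrow> 'x) \<Rightarrow> nat \<Rightarrow> 'x \<Rightarrow> 'x \<Rightarrow> real" where
  "transition_freq x n x0 y0 = (\<Sum>\<tau><n. if x \<tau> = x0 \<and> x (Suc \<tau>) = y0 then 1 else 0) / n"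

lemma visit_freq_nonneg: "0 \<le> visit_freq x n y"
  unfolding visit_freq_def by (intro divide_nonneg_nonneg sum_nonneg) auto

lemma visit_freq_le_1: "visit_freq x n y \<le> 1"
proof (cases "n = 0")
  case False
  have "(\<Sum>\<tau><n. if x \<tau> = y then 1 else (0::real)) \<le> (\<Sum>\<tau><n. 1)"
    by (rule sum_mono) auto
  then show ?thesis
    using False unfolding visit_freq_def by (simp add: divide_le_eq)
qed (simp add: visit_freq_def)

lemma sum_visit_freq:
  assumes "0 < n"
  shows "(\<Sum>y\<in>UNIV. visit_freq x n (y::'x::finite)) = 1"
proof -
  have "(\<Sum>y\<in>UNIV. \<Sum>\<tau><n. if x \<tau> = y then 1 else (0::real)) = (\<Sum>\<tau><n. \<Sum>y\<in>UNIV. if x \<tau> = y then 1 else 0)"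
    by (rule sum.swap)
  also have "\<dots> = n"
    by simp
  finally show ?thesis
    using assms unfolding visit_freq_def by (simp add: sum_divide_distrib[symmetric])
qed

lemma sum_transition_freq_minus_visit_freq:
  fixes x :: "nat \<Rightarrow> 'x::finite"
  shows "(\<Sum>x0\<in>UNIV. transition_freq x n x0 y) - visit_freq x n y =
         ((if x n = y then 1 else 0) - (if x 0 = y then 1 else 0)) / n"
proof -
  have "(\<Sum>x0\<in>UNIV. \<Sum>\<tau><n. if x \<tau> = x0 \<and> x (Suc \<tau>) = y then 1 else (0::real)) =
        (\<Sum>\<tau><n. \<Sum>x0\<in>UNIV. if x \<tau> = x0 \<and> x (Suc \<tau>) = y then 1 else 0)"
    by (rule sum.swap)
  also have "\<dots> = (\<Sum>\<tau><n. if x (Suc \<tau>) = y then 1 else 0)"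
    by (rule sum.cong) (auto simp: if_distrib[symmetric] sum.delta cong: if_cong)
  finally have "(\<Sum>x0\<in>UNIV. \<Sum>\<tau><n. if x \<tau> = x0 \<and> x (Suc \<tau>) = y then 1 else (0::real)) =
                (\<Sum>\<tau><n. if x (Suc \<tau>) = y then 1 else 0)" .
  moreover have "(\<Sum>\<tau><Suc n. if x \<tau> = y then 1 else (0::real)) =
                 (if x 0 = y then 1 else 0) + (\<Sum>\<tau><n. if x (Suc \<tau>) = y then 1 else 0)"
    by (rule sum.lessThan_Suc_shift)
  ultimately show ?thesis
    unfolding transition_freq_def visit_freq_def
    by (simp add: sum_divide_distrib[symmetric] diff_divide_distrib[symmetric])
qed

context
  fixes x :: "nat \<Rightarrow> 'x::finite" and K :: "'x \<Rightarrow> 'x pmf" and \<xi> :: "'x pmf"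
  assumes unique_stationary: "\<And>\<nu>. bind_pmf \<nu> K = \<nu> \<Longrightarrow> \<nu> = \<xi>"
    and innovation_average: "\<And>x0 y0. (\<lambda>n. (\<Sum>\<tau><n. transition_innovation K x0 y0 (x \<tau>) (x (Suc \<tau>))) / n) \<longlonglongrightarrow> 0"
begin

lemma transition_freq_asymp_visit_freq:
  "(\<lambda>n. transition_freq x n x0 y0 - visit_freq x n x0 * pmf (K x0) y0) \<longlonglongrightarrow> 0"
proof -
  have "(\<Sum>\<tau><n. transition_innovation K x0 y0 (x \<tau>) (x (Suc \<tau>))) / n =
        transition_freq x n x0 y0 - visit_freq x n x0 * pmf (K x0) y0" for n
  proof -
    have "transition_innovation K x0 y0 (x \<tau>) (x (Suc \<tau>)) =
          (if x \<tau> = x0 \<and> x (Suc \<tau>) = y0 then 1 else 0) - (if x \<tau> = x0 then 1 else 0) * pmf (K x0) y0" for \<tau>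
      by (simp add: transition_innovation_def)
    then show ?thesis
      unfolding transition_freq_def visit_freq_def
      by (simp only: sum_subtractf sum_distrib_right[symmetric] diff_divide_distrib times_divide_eq_left)
  qed
  then show ?thesis
    using innovation_average[of x0 y0] by simp
qed

lemma visit_freq_asymp_stationary:
  "(\<lambda>n. visit_freq x n y - (\<Sum>x0\<in>UNIV. visit_freq x n x0 * pmf (K x0) y)) \<longlonglongrightarrow> 0"
proof -
  have "(\<lambda>n. ((if x n = y then 1 else 0) - (if x 0 = y then 1 else 0)) / real n) \<longlonglongrightarrow> 0"
    by (rule Lim_null_comparison[OF _ lim_inverse_n'[THEN tendsto_mult_left[of _ _ _ 2], simplified]])
       (auto intro!: always_eventually simp: divide_simps)
  then have "(\<lambda>n. (\<Sum>x0\<in>UNIV. transition_freq x n x0 y) - visit_freq x n y) \<longlonglongrightarrow> 0"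
    by (simp only: sum_transition_freq_minus_visit_freq)
  then have "(\<lambda>n. (\<Sum>x0\<in>UNIV. transition_freq x n x0 y - visit_freq x n x0 * pmf (K x0) y) -
                  ((\<Sum>x0\<in>UNIV. transition_freq x n x0 y) - visit_freq x n y)) \<longlonglongrightarrow> 0 - 0"
    by (intro tendsto_diff tendsto_null_sum transition_freq_asymp_visit_freq)
  then show ?thesis
    by (simp add: sum_subtractf)
qed

lemma stationary_weights_eq_pmf:
  fixes \<nu> :: "'x \<Rightarrow> real"
  assumes nonneg: "\<And>y. 0 \<le> \<nu> y" and sum_1: "(\<Sum>y\<in>UNIV. \<nu> y) = 1"
    and stationary: "\<And>y. \<nu> y = (\<Sum>x0\<in>UNIV. \<nu> x0 * pmf (K x0) y)"
  shows "\<nu> y = pmf \<xi> y"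
proof -
  have "(\<integral>\<^sup>+y. ennreal (\<nu> y) \<partial>count_space UNIV) = 1"
    by (simp add: nn_integral_count_space_finite sum_ennreal nonneg sum_1)
  then have pmf_p: "pmf (embed_pmf \<nu>) y = \<nu> y" for y
    by (rule pmf_embed_pmf[OF nonneg])
  have "bind_pmf (embed_pmf \<nu>) K = embed_pmf \<nu>"
  proof (rule pmf_eqI)
    fix y
    have "pmf (bind_pmf (embed_pmf \<nu>) K) y = (\<Sum>x0\<in>UNIV. pmf (K x0) y * pmf (embed_pmf \<nu>) x0)"
      unfolding pmf_bind by (rule integral_measure_pmf_real) auto
    then show "pmf (bind_pmf (embed_pmf \<nu>) K) y = pmf (embed_pmf \<nu>) y"
      using stationary[of y] by (simp add: pmf_p mult.commute)
  qed
  then have "embed_pmf \<nu> = \<xi>"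
    by (rule unique_stationary)
  then show ?thesis
    using pmf_p[of y] by simp
qed

lemma visit_freq_tendsto: "(\<lambda>n. visit_freq x n y) \<longlonglongrightarrow> pmf \<xi> y"
proof -
  define a where "a n = (\<chi> z. visit_freq x n z)" for n
  have "a \<longlonglongrightarrow> (\<chi> z. pmf \<xi> z)"
  proof (rule tendsto_of_bounded_unique_limit_point)
    have "norm (a n) \<le> CARD('x)" for n
    proof -
      have "norm (a n) \<le> (\<Sum>z\<in>UNIV. \<bar>a n $ z\<bar>)"
        by (rule norm_le_l1_cart)
      also have "\<dots> \<le> (\<Sum>z\<in>(UNIV::'x set). 1)"
        by (rule sum_mono) (simp add: a_def abs_of_nonneg visit_freq_nonneg visit_freq_le_1)
      finally show ?thesis
        by simp
    qed
    then show "bounded (range a)"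
      unfolding bounded_iff by blast
  next
    fix r l assume r: "strict_mono r" and lim: "(a \<circ> r) \<longlonglongrightarrow> l"
    have lim_z: "(\<lambda>k. visit_freq x (r k) z) \<longlonglongrightarrow> l $ z" for z
      using tendsto_vec_nth[OF lim, of z] by (simp add: a_def o_def)
    have "0 \<le> l $ z" for z
      by (rule LIMSEQ_le_const[OF lim_z]) (simp add: visit_freq_nonneg)
    moreover have "(\<Sum>z\<in>UNIV. l $ z) = 1"
    proof (rule LIMSEQ_unique)
      show "(\<lambda>k. \<Sum>z\<in>UNIV. visit_freq x (r k) z) \<longlonglongrightarrow> (\<Sum>z\<in>UNIV. l $ z)"
        by (intro tendsto_sum lim_z)
      have "\<forall>\<^sub>F k in sequentially. (\<Sum>z\<in>UNIV. visit_freq x (r k) z) = 1"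
        unfolding eventually_sequentially
      proof (intro exI allI impI)
        fix k :: nat assume "1 \<le> k"
        then have "0 < r k"
          using seq_suble[OF r, of k] by simp
        then show "(\<Sum>z\<in>UNIV. visit_freq x (r k) z) = 1"
          by (rule sum_visit_freq)
      qed
      then show "(\<lambda>k. \<Sum>z\<in>UNIV. visit_freq x (r k) z) \<longlonglongrightarrow> 1"
        by (rule tendsto_eventually)
    qed
    moreover have "l $ y = (\<Sum>x0\<in>UNIV. l $ x0 * pmf (K x0) y)" for y
    proof -
      have "(\<lambda>k. visit_freq x (r k) y - (\<Sum>x0\<in>UNIV. visit_freq x (r k) x0 * pmf (K x0) y)) \<longlonglongrightarrow> 0"
        using LIMSEQ_subseq_LIMSEQ[OF visit_freq_asymp_stationary r] by (simp add: o_def)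
      moreover have "(\<lambda>k. visit_freq x (r k) y - (\<Sum>x0\<in>UNIV. visit_freq x (r k) x0 * pmf (K x0) y)) \<longlonglongrightarrow>
                     l $ y - (\<Sum>x0\<in>UNIV. l $ x0 * pmf (K x0) y)"
        by (intro tendsto_diff tendsto_sum tendsto_mult_right lim_z)
      ultimately show ?thesis
        using LIMSEQ_unique by fastforce
    qed
    ultimately have "l $ z = pmf \<xi> z" for z
      by (rule stationary_weights_eq_pmf)
    then show "l = (\<chi> z. pmf \<xi> z)"
      by (simp add: vec_eq_iff)
  qed
  from tendsto_vec_nth[OF this, of y] show ?thesis
    by (simp add: a_def)
qed

lemma transition_freq_tendsto: "(\<lambda>n. transition_freq x n x0 y0) \<longlonglongrightarrow> pmf \<xi> x0 * pmf (K x0) y0"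
proof -
  have "(\<lambda>n. (transition_freq x n x0 y0 - visit_freq x n x0 * pmf (K x0) y0) + visit_freq x n x0 * pmf (K x0) y0)
        \<longlonglongrightarrow> 0 + pmf \<xi> x0 * pmf (K x0) y0"
    by (intro tendsto_add transition_freq_asymp_visit_freq tendsto_mult_right visit_freq_tendsto)
  then show ?thesis
    by simp
qed

lemma pair_average_tendsto:
  fixes h :: "'x \<Rightarrow> 'x \<Rightarrow> real"
  shows "(\<lambda>n. (\<Sum>\<tau><n. h (x \<tau>) (x (Suc \<tau>))) / n) \<longlonglongrightarrow>
         (\<Sum>x0\<in>UNIV. \<Sum>y0\<in>UNIV. pmf \<xi> x0 * pmf (K x0) y0 * h x0 y0)"
proof -
  have "h (x \<tau>) (x (Suc \<tau>)) = (\<Sum>x0\<in>UNIV. \<Sum>y0\<in>UNIV. (if x \<tau> = x0 \<and> x (Suc \<tau>) = y0 then 1 else 0) * h x0 y0)"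
    for \<tau>
  proof -
    have "(\<Sum>x0\<in>UNIV. \<Sum>y0\<in>UNIV. (if x \<tau> = x0 \<and> x (Suc \<tau>) = y0 then 1 else 0) * h x0 y0) =
          (\<Sum>x0\<in>UNIV. if x \<tau> = x0 then h x0 (x (Suc \<tau>)) else 0)"
      by (rule sum.cong) (auto simp: if_distrib[of "\<lambda>c. c * _"] sum.delta' cong: if_cong)
    then show ?thesis
      by (simp add: sum.delta')
  qed
  then have "(\<Sum>\<tau><n. h (x \<tau>) (x (Suc \<tau>))) =
      (\<Sum>x0\<in>UNIV. \<Sum>y0\<in>UNIV. \<Sum>\<tau><n. (if x \<tau> = x0 \<and> x (Suc \<tau>) = y0 then 1 else 0) * h x0 y0)" for n
    by (simp add: sum.swap[of _ "{..<n}"])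
  moreover have "(\<Sum>x0\<in>UNIV. \<Sum>y0\<in>UNIV. transition_freq x n x0 y0 * h x0 y0) =
      (\<Sum>x0\<in>UNIV. \<Sum>y0\<in>UNIV. \<Sum>\<tau><n. (if x \<tau> = x0 \<and> x (Suc \<tau>) = y0 then 1 else 0) * h x0 y0) / n" for n
    unfolding transition_freq_def
    by (simp only: times_divide_eq_left sum_divide_distrib sum_distrib_right)
  ultimately have average_eq: "(\<Sum>\<tau><n. h (x \<tau>) (x (Suc \<tau>))) / n =
      (\<Sum>x0\<in>UNIV. \<Sum>y0\<in>UNIV. transition_freq x n x0 y0 * h x0 y0)" for n
    by simp
  show ?thesis
    unfolding average_eq by (intro tendsto_sum tendsto_mult_right transition_freq_tendsto)
qed

end

context finite_markov_chain
begin

lemma AE_pair_average_tendsto: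
  assumes unique_stationary: "\<And>\<nu>. bind_pmf \<nu> K = \<nu> \<Longrightarrow> \<nu> = \<xi>"
  shows "AE \<omega> in M. \<forall>h. (\<lambda>n. (\<Sum>\<tau><n. h (X \<tau> \<omega>) (X (Suc \<tau>) \<omega>)) / n) \<longlonglongrightarrow>
                        (\<Sum>x0\<in>UNIV. \<Sum>y0\<in>UNIV. pmf \<xi> x0 * pmf (K x0) y0 * h x0 y0)"
proof -
  have "AE \<omega> in M. \<forall>p\<in>UNIV. (\<lambda>n. increment_sum (transition_innovation K (fst p) (snd p)) n \<omega> / n) \<longlonglongrightarrow> 0"
    by (rule AE_finite_allI)
       (auto intro: AE_increment_average_tendsto_0 transition_innovation_centered abs_transition_innovation_le_1)
  then show ?thesis
    by eventually_elim (auto intro!: pair_average_tendsto[OF unique_stationary] simp: increment_sum_def)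
qed

end

section \<open>Recurrent Q-learning along a trajectory\<close>

lemma max_q_ge: "Q z a \<le> max_q (Q :: 'z \<Rightarrow> 'a::finite \<Rightarrow> real) z"
  unfolding max_q_def by (rule Max_ge) auto

lemma max_q_attained:
  obtains a where "max_q (Q :: 'z \<Rightarrow> 'a::finite \<Rightarrow> real) z = Q z a"
proof -
  have "Max (range (Q z)) \<in> range (Q z)"
    by (rule Max_in) auto
  then show ?thesis
    using that unfolding max_q_def by blast
qed

lemma abs_max_q_diff_le:
  fixes Q Q' :: "'z \<Rightarrow> 'a::finite \<Rightarrow> real"
  assumes "\<And>a. \<bar>Q z a - Q' z a\<bar> \<le> D"
  shows "\<bar>max_q Q z - max_q Q' z\<bar> \<le> D"
proof -
  obtain a where a: "max_q Q z = Q z a"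
    by (rule max_q_attained)
  obtain a' where a': "max_q Q' z = Q' z a'"
    by (rule max_q_attained)
  have "Q z a \<le> Q' z a + D" "Q' z a' \<le> Q z a' + D"
    using assms[of a] assms[of a'] by auto
  moreover have "Q' z a \<le> max_q Q' z" "Q z a' \<le> max_q Q z"
    by (rule max_q_ge)+
  ultimately show ?thesis
    using a a' by linarith
qed

lemma abs_max_q_le:
  fixes Q :: "'z \<Rightarrow> 'a::finite \<Rightarrow> real"
  assumes "\<And>a. \<bar>Q z a\<bar> \<le> B"
  shows "\<bar>max_q Q z\<bar> \<le> B"
  using abs_max_q_diff_le[of Q z "\<lambda>_ _. 0" B] assms by (simp add: max_q_def)

lemma greedy_eq_if_strict_max:
  fixes Q :: "'z \<Rightarrow> 'a::finite \<Rightarrow> real"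
  assumes strict: "\<And>a. a \<noteq> a0 \<Longrightarrow> Q z a < Q z a0"
  shows "greedy sel Q z = sel {a0}"
proof -
  obtain a1 where a1: "max_q Q z = Q z a1"
    by (rule max_q_attained)
  have "a1 = a0"
  proof (rule ccontr)
    assume "a1 \<noteq> a0"
    then show False
      using strict[of a1] max_q_ge[of Q z a0] a1 by simp
  qed
  then have "Q z a = max_q Q z \<longleftrightarrow> a = a0" for a
    using strict[of a] a1 by (cases "a = a0") auto
  then have "{a. Q z a = max_q Q z} = {a0}"
    by auto
  then show ?thesis
    unfolding greedy_def by simp
qed

lemma eventually_greedy_eq:
  fixes Q :: "nat \<Rightarrow> 'z \<Rightarrow> 'a::finite \<Rightarrow> real"
  assumes lim: "\<And>a. (\<lambda>t. Q t z a) \<longlonglongrightarrow> Q' z a"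
    and unique: "\<exists>!a. Q' z a = max_q Q' z"
  shows "\<forall>\<^sub>F t in sequentially. greedy sel (Q t) z = greedy sel Q' z"
proof -
  obtain a0 where a0: "Q' z a0 = max_q Q' z" and only_a0: "\<And>a. Q' z a = max_q Q' z \<Longrightarrow> a = a0"
    using unique by blast
  have strict: "Q' z a < Q' z a0" if "a \<noteq> a0" for a
    using max_q_ge[of Q' z a] a0 only_a0[of a] that by fastforce
  have "\<forall>\<^sub>F t in sequentially. a \<noteq> a0 \<longrightarrow> Q t z a < Q t z a0" for a
  proof (cases "a = a0")
    case False
    have "(\<lambda>t. Q t z a0 - Q t z a) \<longlonglongrightarrow> Q' z a0 - Q' z a"
      by (intro tendsto_diff lim)
    then have "\<forall>\<^sub>F t in sequentially. 0 < Q t z a0 - Q t z a"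
      using strict[OF False] by (intro order_tendstoD(1)) auto
    then show ?thesis
      by eventually_elim simp
  qed simp
  then have "\<forall>\<^sub>F t in sequentially. \<forall>a. a \<noteq> a0 \<longrightarrow> Q t z a < Q t z a0"
    by (rule eventually_all_finite)
  then show ?thesis
  proof eventually_elim
    case (elim t)
    then have "greedy sel (Q t) z = sel {a0}"
      by (intro greedy_eq_if_strict_max) auto
    moreover have "greedy sel Q' z = sel {a0}"
      using strict by (rule greedy_eq_if_strict_max)
    ultimately show ?case
      by simp
  qed
qed

definition visit :: "(nat \<Rightarrow> 's \<times> 'y \<times> 'z \<times> 'a) \<Rightarrow> nat \<Rightarrow> 'z \<Rightarrow> 'a \<Rightarrow> real" where
  "visit x \<tau> z a = (if trZ x \<tau> = z \<and> trA x \<tau> = a then 1 else 0)"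

definition visit_count :: "(nat \<Rightarrow> 's \<times> 'y \<times> 'z \<times> 'a) \<Rightarrow> nat \<Rightarrow> 'z \<Rightarrow> 'a \<Rightarrow> real" where
  "visit_count x t z a = (\<Sum>\<tau><t. visit x \<tau> z a)"

lemma visit_nonneg: "0 \<le> visit x \<tau> z a"
  unfolding visit_def by simp

lemma visit_count_nonneg: "0 \<le> visit_count x t z a"
  unfolding visit_count_def by (intro sum_nonneg visit_nonneg)

lemma visit_count_Suc: "visit_count x (Suc t) z a = visit_count x t z a + visit x t z a"
  unfolding visit_count_def by simp

lemma lrate_eq: "lrate x t z a = visit x t z a / (1 + visit_count x (Suc t) z a)"
proof -
  have "{0..t} = {..<Suc t}"
    by auto
  then show ?thesis
    unfolding lrate_def visit_def visit_count_def by simp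
qed

lemma lrate_nonneg: "0 \<le> lrate x t z a"
  unfolding lrate_eq using visit_count_nonneg[of x "Suc t" z a] by (simp add: visit_nonneg)

lemma lrate_le_1: "lrate x t z a \<le> 1"
  unfolding lrate_eq using visit_count_nonneg[of x "Suc t" z a] by (simp add: visit_def)

lemma qlearn_running_average:
  "(1 + visit_count x t z a) * qlearn r \<gamma> Q0 x t z a = Q0 z a +
     (\<Sum>\<tau><t. visit x \<tau> z a * (r (trS x \<tau>) (trA x \<tau>) + \<gamma> * max_q (qlearn r \<gamma> Q0 x \<tau>) (trZ x (Suc \<tau>))))"
proof (induction t)
  case 0
  then show ?case
    by (simp add: visit_count_def)
next
  case (Suc t)
  let ?Q = "qlearn r \<gamma> Q0 x t z a"
  let ?T = "r (trS x t) (trA x t) + \<gamma> * max_q (qlearn r \<gamma> Q0 x t) (trZ x (Suc t))"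
  have step: "qlearn r \<gamma> Q0 x (Suc t) z a = ?Q + lrate x t z a * (?T - ?Q)"
    by (simp add: Let_def)
  have "(1 + visit_count x (Suc t) z a) * qlearn r \<gamma> Q0 x (Suc t) z a =
        (1 + visit_count x t z a) * ?Q + visit x t z a * ?T"
    using visit_count_nonneg[of x "Suc t" z a]
    unfolding step lrate_eq by (simp add: visit_count_Suc visit_def field_simps)
  then show ?case
    using Suc.IH by simp
qed

lemma abs_qlearn_le:
  assumes "0 \<le> \<gamma>"
    and Q0: "\<And>z a. \<bar>Q0 z a\<bar> \<le> B" and r: "\<And>s a. \<bar>r s a\<bar> \<le> (1 - \<gamma>) * B"
  shows "\<bar>qlearn r \<gamma> Q0 x t z a\<bar> \<le> B"
proof (induction t arbitrary: z a)
  case 0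
  then show ?case
    using Q0 by simp
next
  case (Suc t)
  let ?Q = "qlearn r \<gamma> Q0 x t z a"
  let ?T = "r (trS x t) (trA x t) + \<gamma> * max_q (qlearn r \<gamma> Q0 x t) (trZ x (Suc t))"
  let ?\<alpha> = "lrate x t z a"
  have "\<bar>max_q (qlearn r \<gamma> Q0 x t) (trZ x (Suc t))\<bar> \<le> B"
    by (rule abs_max_q_le) (rule Suc.IH)
  then have "\<bar>\<gamma> * max_q (qlearn r \<gamma> Q0 x t) (trZ x (Suc t))\<bar> \<le> \<gamma> * B"
    using \<open>0 \<le> \<gamma>\<close> by (simp add: abs_mult mult_left_mono)
  then have "\<bar>?T\<bar> \<le> B"
    using r[of "trS x t" "trA x t"] by (simp add: algebra_simps)
  have "\<bar>(1 - ?\<alpha>) * ?Q + ?\<alpha> * ?T\<bar> \<le> \<bar>(1 - ?\<alpha>) * ?Q\<bar> + \<bar>?\<alpha> * ?T\<bar>"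
    by (rule abs_triangle_ineq)
  also have "\<dots> = (1 - ?\<alpha>) * \<bar>?Q\<bar> + ?\<alpha> * \<bar>?T\<bar>"
    using lrate_nonneg[of x t z a] lrate_le_1[of x t z a] by (simp add: abs_mult)
  also have "\<dots> \<le> (1 - ?\<alpha>) * B + ?\<alpha> * B"
    using lrate_nonneg[of x t z a] lrate_le_1[of x t z a] \<open>\<bar>?T\<bar> \<le> B\<close> Suc.IH
    by (intro add_mono mult_left_mono) auto
  finally show ?case
    by (simp add: Let_def algebra_simps)
qed

lemma abs_le_sum_sum_abs:
  fixes F :: "'b::finite \<Rightarrow> 'c::finite \<Rightarrow> real"
  shows "\<bar>F u v\<bar> \<le> (\<Sum>u\<in>UNIV. \<Sum>v\<in>UNIV. \<bar>F u v\<bar>)"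
proof -
  have "\<bar>F u v\<bar> \<le> (\<Sum>v\<in>UNIV. \<bar>F u v\<bar>)"
    by (rule member_le_sum) auto
  also have "\<dots> \<le> (\<Sum>u\<in>UNIV. \<Sum>v\<in>UNIV. \<bar>F u v\<bar>)"
    by (rule member_le_sum[of u UNIV "\<lambda>u. \<Sum>v\<in>UNIV. \<bar>F u v\<bar>"]) (auto intro: sum_nonneg)
  finally show ?thesis .
qed

text \<open>For the chain of the theorem, \<open>c\<close>, \<open>rx\<close> and \<open>Px\<close> are the \<open>\<xi>\<close>-marginal of \<open>(z, a)\<close>,
  \<open>r_xi\<close> and \<open>P_xi\<close>.\<close>

locale qlearning_trajectory =
  fixes x :: "nat \<Rightarrow> 's \<times> 'y \<times> 'z::finite \<times> 'a::finite"
    and r :: "'s \<Rightarrow> 'a \<Rightarrow> real" and \<gamma> :: real and Q0 Qs rx c :: "'z \<Rightarrow> 'a \<Rightarrow> real"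
    and Px :: "'z \<Rightarrow> 'z \<Rightarrow> 'a \<Rightarrow> real"
  assumes discount: "0 \<le> \<gamma>" "\<gamma> < 1"
    and fixpoint: "\<And>z a. Qs z a = rx z a + \<gamma> * (\<Sum>z'\<in>UNIV. Px z' z a * max_q Qs z')"
    and visit_rate: "\<And>z a. (\<lambda>t. visit_count x t z a / t) \<longlonglongrightarrow> c z a"
    and visit_rate_pos: "\<And>z a. 0 < c z a"
    and reward_rate: "\<And>z a. (\<lambda>t. (\<Sum>\<tau><t. visit x \<tau> z a * r (trS x \<tau>) (trA x \<tau>)) / t) \<longlonglongrightarrow> c z a * rx z a"
    and transition_rate: "\<And>z a z'.
      (\<lambda>t. (\<Sum>\<tau><t. visit x \<tau> z a * (if trZ x (Suc \<tau>) = z' then 1 else 0)) / t) \<longlonglongrightarrow> c z a * Px z' z a"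
begin

abbreviation Q :: "nat \<Rightarrow> 'z \<Rightarrow> 'a \<Rightarrow> real" where
  "Q t \<equiv> qlearn r \<gamma> Q0 x t"

lemma tendsto_div_one_plus_visit_count:
  assumes "(\<lambda>t. Y t / t) \<longlonglongrightarrow> L"
  shows "(\<lambda>t. Y t / (1 + visit_count x t z a)) \<longlonglongrightarrow> L / c z a"
proof -
  have "(\<lambda>t. 1 / real t + visit_count x t z a / t) \<longlonglongrightarrow> 0 + c z a"
    by (intro tendsto_add lim_inverse_n' visit_rate)
  then have "(\<lambda>t. (Y t / t) / (1 / real t + visit_count x t z a / t)) \<longlonglongrightarrow> L / (0 + c z a)"
    using visit_rate_pos[of z a] by (intro tendsto_divide assms) auto
  moreover have "\<forall>\<^sub>F t in sequentially. (Y t / t) / (1 / real t + visit_count x t z a / t) =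
                                         Y t / (1 + visit_count x t z a)"
    using eventually_gt_at_top[of 0] by eventually_elim (simp add: add_divide_distrib[symmetric])
  ultimately show ?thesis
    by (simp add: Lim_transform_eventually)
qed

lemma const_div_one_plus_visit_count_tendsto_0: "(\<lambda>t. C / (1 + visit_count x t z a)) \<longlonglongrightarrow> 0"
  using tendsto_div_one_plus_visit_count[of "\<lambda>_. C" 0 z a] lim_const_over_n[of C] by simp

text \<open>Only the last summand involves the iterates; the first two vanish by the frequency limits.\<close>

lemma qlearn_error_decomposition:
  "Q t z a - Qs z a =
     ((Q0 z a + (\<Sum>\<tau><t. visit x \<tau> z a * r (trS x \<tau>) (trA x \<tau>))) / (1 + visit_count x t z a) - rx z a)
   + \<gamma> * (\<Sum>z'\<in>UNIV. max_q Qs z' *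
       ((\<Sum>\<tau><t. visit x \<tau> z a * (if trZ x (Suc \<tau>) = z' then 1 else 0)) / (1 + visit_count x t z a) - Px z' z a))
   + \<gamma> * ((\<Sum>\<tau><t. visit x \<tau> z a * (max_q (Q \<tau>) (trZ x (Suc \<tau>)) - max_q Qs (trZ x (Suc \<tau>))))
           / (1 + visit_count x t z a))"
  (is "_ = (?R / ?N - _) + \<gamma> * ?P + \<gamma> * (?F / ?N)")
proof -
  let ?C = "\<lambda>z'. \<Sum>\<tau><t. visit x \<tau> z a * (if trZ x (Suc \<tau>) = z' then 1 else 0)"
  have N: "0 < ?N"
    using visit_count_nonneg[of x t z a] by simp
  have "(\<Sum>z'\<in>UNIV. max_q Qs z' * ?C z') =
        (\<Sum>z'\<in>UNIV. \<Sum>\<tau><t. if trZ x (Suc \<tau>) = z' then max_q Qs z' * visit x \<tau> z a else 0)"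
    by (simp add: sum_distrib_left if_distrib[of "\<lambda>c. _ * c"] cong: if_cong)
  also have "\<dots> = (\<Sum>\<tau><t. \<Sum>z'\<in>UNIV. if trZ x (Suc \<tau>) = z' then max_q Qs z' * visit x \<tau> z a else 0)"
    by (rule sum.swap)
  also have "\<dots> = (\<Sum>\<tau><t. visit x \<tau> z a * max_q Qs (trZ x (Suc \<tau>)))"
    by (simp add: sum.delta mult.commute)
  finally have "(\<Sum>z'\<in>UNIV. max_q Qs z' * ?C z') = (\<Sum>\<tau><t. visit x \<tau> z a * max_q Qs (trZ x (Suc \<tau>)))" .
  moreover have "visit x \<tau> z a * (r (trS x \<tau>) (trA x \<tau>) + \<gamma> * max_q (Q \<tau>) (trZ x (Suc \<tau>))) =
      visit x \<tau> z a * r (trS x \<tau>) (trA x \<tau>)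
      + \<gamma> * (visit x \<tau> z a * (max_q (Q \<tau>) (trZ x (Suc \<tau>)) - max_q Qs (trZ x (Suc \<tau>))))
      + \<gamma> * (visit x \<tau> z a * max_q Qs (trZ x (Suc \<tau>)))" for \<tau>
    by (simp add: algebra_simps)
  ultimately have "?N * Q t z a = ?R + \<gamma> * ?F + \<gamma> * (\<Sum>z'\<in>UNIV. max_q Qs z' * ?C z')"
    unfolding qlearn_running_average by (simp add: sum.distrib sum_distrib_left)
  then have Q_eq: "Q t z a = (?R + \<gamma> * ?F + \<gamma> * (\<Sum>z'\<in>UNIV. max_q Qs z' * ?C z')) / ?N"
    using N by (metis nonzero_mult_div_cancel_left less_irrefl)
  have P_eq: "?P = (\<Sum>z'\<in>UNIV. max_q Qs z' * ?C z') / ?N - (\<Sum>z'\<in>UNIV. Px z' z a * max_q Qs z')"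
    by (simp only: right_diff_distrib sum_subtractf times_divide_eq_right sum_divide_distrib[symmetric])
       (simp add: mult.commute)
  have "(R + g * F + g * S) / n - (\<rho> + g * S') = (R / n - \<rho>) + g * (S / n - S') + g * (F / n)"
    for R F S S' \<rho> g n :: real
    by (simp add: add_divide_distrib algebra_simps)
  then show ?thesis
    unfolding Q_eq fixpoint[of z a] P_eq .
qed

lemma abs_sum_visit_max_q_error_le:
  assumes "0 \<le> D" and error: "\<And>\<tau> z a. T0 \<le> \<tau> \<Longrightarrow> \<bar>Q \<tau> z a - Qs z a\<bar> \<le> D"
  defines "g \<equiv> \<lambda>\<tau>. max_q (Q \<tau>) (trZ x (Suc \<tau>)) - max_q Qs (trZ x (Suc \<tau>))"
  shows "\<bar>\<Sum>\<tau><t. visit x \<tau> z a * g \<tau>\<bar> \<le> (\<Sum>\<tau><T0. \<bar>g \<tau>\<bar>) + D * visit_count x t z a"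
proof -
  have "\<bar>visit x \<tau> z a * g \<tau>\<bar> \<le> (if \<tau> < T0 then \<bar>g \<tau>\<bar> else 0) + D * visit x \<tau> z a" for \<tau>
  proof (cases "\<tau> < T0")
    case False
    then have "\<bar>g \<tau>\<bar> \<le> D"
      unfolding g_def by (intro abs_max_q_diff_le error) simp
    then show ?thesis
      using False by (simp add: visit_def)
  qed (use \<open>0 \<le> D\<close> in \<open>simp add: visit_def\<close>)
  then have "\<bar>\<Sum>\<tau><t. visit x \<tau> z a * g \<tau>\<bar> \<le> (\<Sum>\<tau><t. (if \<tau> < T0 then \<bar>g \<tau>\<bar> else 0) + D * visit x \<tau> z a)"
    by (intro order_trans[OF sum_abs] sum_mono)
  also have "\<dots> = (\<Sum>\<tau>\<in>{..<t} \<inter> {..<T0}. \<bar>g \<tau>\<bar>) + D * visit_count x t z a"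
    by (simp add: visit_count_def sum.distrib sum_distrib_left sum.inter_restrict)
  also have "(\<Sum>\<tau>\<in>{..<t} \<inter> {..<T0}. \<bar>g \<tau>\<bar>) \<le> (\<Sum>\<tau><T0. \<bar>g \<tau>\<bar>)"
    by (rule sum_mono2) auto
  finally show ?thesis
    by simp
qed

lemma reward_average_error_tendsto_0:
  "(\<lambda>t. (Q0 z a + (\<Sum>\<tau><t. visit x \<tau> z a * r (trS x \<tau>) (trA x \<tau>))) / (1 + visit_count x t z a) - rx z a)
     \<longlonglongrightarrow> 0"
proof -
  have "(\<lambda>t. Q0 z a / (1 + visit_count x t z a) +
             (\<Sum>\<tau><t. visit x \<tau> z a * r (trS x \<tau>) (trA x \<tau>)) / (1 + visit_count x t z a) - rx z a)
        \<longlonglongrightarrow> 0 + (c z a * rx z a) / c z a - rx z a"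
    by (intro tendsto_diff tendsto_add const_div_one_plus_visit_count_tendsto_0
        tendsto_div_one_plus_visit_count reward_rate tendsto_const)
  then show ?thesis
    using visit_rate_pos[of z a] by (simp add: add_divide_distrib)
qed

lemma transition_average_error_tendsto_0:
  "(\<lambda>t. \<Sum>z'\<in>UNIV. max_q Qs z' *
     ((\<Sum>\<tau><t. visit x \<tau> z a * (if trZ x (Suc \<tau>) = z' then 1 else 0)) / (1 + visit_count x t z a) - Px z' z a))
   \<longlonglongrightarrow> 0"
proof -
  have "(\<lambda>t. \<Sum>z'\<in>UNIV. max_q Qs z' *
     ((\<Sum>\<tau><t. visit x \<tau> z a * (if trZ x (Suc \<tau>) = z' then 1 else 0)) / (1 + visit_count x t z a) - Px z' z a))
   \<longlonglongrightarrow> (\<Sum>z'\<in>UNIV. max_q Qs z' * ((c z a * Px z' z a) / c z a - Px z' z a))"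
    by (intro tendsto_sum tendsto_mult tendsto_const tendsto_diff tendsto_div_one_plus_visit_count transition_rate)
  then show ?thesis
    using visit_rate_pos[of z a] by simp
qed

lemma eventually_abs_qlearn_error_le:
  assumes "0 \<le> D" and error: "\<And>\<tau> z a. T0 \<le> \<tau> \<Longrightarrow> \<bar>Q \<tau> z a - Qs z a\<bar> \<le> D" and "0 < \<delta>"
  shows "\<forall>\<^sub>F t in sequentially. \<bar>Q t z a - Qs z a\<bar> \<le> \<gamma> * D + \<delta>"
proof -
  define N where "N t = 1 + visit_count x t z a" for t
  define g where "g \<tau> = max_q (Q \<tau>) (trZ x (Suc \<tau>)) - max_q Qs (trZ x (Suc \<tau>))" for \<tau>
  define E1 where "E1 t = (Q0 z a + (\<Sum>\<tau><t. visit x \<tau> z a * r (trS x \<tau>) (trA x \<tau>))) / N t - rx z a" for t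
  define E2 where "E2 t = (\<Sum>z'\<in>UNIV. max_q Qs z' *
    ((\<Sum>\<tau><t. visit x \<tau> z a * (if trZ x (Suc \<tau>) = z' then 1 else 0)) / N t - Px z' z a))" for t
  define B where "B = (\<Sum>\<tau><T0. \<bar>g \<tau>\<bar>)"
  have N: "0 < N t" "visit_count x t z a / N t \<le> 1" for t
    using visit_count_nonneg[of x t z a] by (simp_all add: N_def)
  have "E1 \<longlonglongrightarrow> 0"
    unfolding E1_def N_def by (rule reward_average_error_tendsto_0)
  then have "\<forall>\<^sub>F t in sequentially. \<bar>E1 t\<bar> < \<delta> / 3"
    using \<open>0 < \<delta>\<close> by (auto dest: tendstoD[of _ 0 _ "\<delta> / 3"] simp: dist_real_def)
  moreover have "E2 \<longlonglongrightarrow> 0"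
    unfolding E2_def N_def by (rule transition_average_error_tendsto_0)
  then have "\<forall>\<^sub>F t in sequentially. \<bar>E2 t\<bar> < \<delta> / 3"
    using \<open>0 < \<delta>\<close> by (auto dest: tendstoD[of _ 0 _ "\<delta> / 3"] simp: dist_real_def)
  moreover have "(\<lambda>t. B / N t) \<longlonglongrightarrow> 0"
    unfolding N_def by (rule const_div_one_plus_visit_count_tendsto_0)
  then have "\<forall>\<^sub>F t in sequentially. \<bar>B / N t\<bar> < \<delta> / 3"
    using \<open>0 < \<delta>\<close> by (auto dest: tendstoD[of _ 0 _ "\<delta> / 3"] simp: dist_real_def)
  ultimately show ?thesis
  proof eventually_elim
    case (elim t)
    have "\<bar>(\<Sum>\<tau><t. visit x \<tau> z a * g \<tau>) / N t\<bar> = \<bar>\<Sum>\<tau><t. visit x \<tau> z a * g \<tau>\<bar> / N t"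
      using N(1)[of t] by simp
    also have "\<dots> \<le> (B + D * visit_count x t z a) / N t"
      using abs_sum_visit_max_q_error_le[OF \<open>0 \<le> D\<close> error] N(1)[of t]
      by (intro divide_right_mono) (simp_all add: B_def g_def)
    also have "\<dots> = B / N t + D * (visit_count x t z a / N t)"
      by (simp add: add_divide_distrib)
    also have "\<dots> \<le> \<bar>B / N t\<bar> + D"
      using N(2)[of t] \<open>0 \<le> D\<close> by (intro add_mono abs_ge_self mult_left_le)
    finally have "\<gamma> * \<bar>(\<Sum>\<tau><t. visit x \<tau> z a * g \<tau>) / N t\<bar> \<le> \<gamma> * (\<delta> / 3) + \<gamma> * D"
      using elim discount by (smt (verit) mult_left_mono distrib_left)
    moreover have "\<gamma> * \<bar>E2 t\<bar> \<le> \<bar>E2 t\<bar>" and "\<gamma> * (\<delta> / 3) \<le> \<delta> / 3"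
      using discount \<open>0 < \<delta>\<close> by (simp_all add: mult_left_le_one_le)
    moreover have "\<bar>Q t z a - Qs z a\<bar> \<le> \<bar>E1 t\<bar> + \<gamma> * \<bar>E2 t\<bar> + \<gamma> * \<bar>(\<Sum>\<tau><t. visit x \<tau> z a * g \<tau>) / N t\<bar>"
      unfolding qlearn_error_decomposition[of t z a] E1_def E2_def N_def g_def
      using discount by (simp add: abs_mult abs_triangle_ineq order_trans[OF abs_triangle_ineq add_mono])
    ultimately show ?case
      using elim by linarith
  qed
qed

lemma abs_qlearn_error_bounded:
  assumes "\<And>s a. \<bar>r s a\<bar> \<le> R"
  obtains D where "0 \<le> D" "\<And>t z a. \<bar>Q t z a - Qs z a\<bar> \<le> D"
proof -
  define B where "B = (\<Sum>z\<in>UNIV. \<Sum>a\<in>UNIV. \<bar>Q0 z a\<bar>) + R / (1 - \<gamma>)"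
  have "0 \<le> R"
    using assms[of undefined undefined] by simp
  moreover have "0 \<le> (\<Sum>z\<in>UNIV. \<Sum>a\<in>UNIV. \<bar>Q0 z a\<bar>)"
    by (intro sum_nonneg) simp
  moreover have "(1 - \<gamma>) * B = (1 - \<gamma>) * (\<Sum>z\<in>UNIV. \<Sum>a\<in>UNIV. \<bar>Q0 z a\<bar>) + R"
    using discount unfolding B_def by (simp add: distrib_left)
  moreover have "0 \<le> R / (1 - \<gamma>)" "0 \<le> (1 - \<gamma>) * (\<Sum>z\<in>UNIV. \<Sum>a\<in>UNIV. \<bar>Q0 z a\<bar>)"
    using discount \<open>0 \<le> R\<close> by (simp_all add: sum_nonneg)
  ultimately have "\<bar>Q0 z a\<bar> \<le> B" "\<bar>r s a\<bar> \<le> (1 - \<gamma>) * B" for z s a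
    using abs_le_sum_sum_abs[of Q0 z a] assms[of s a] unfolding B_def by linarith+
  then have "\<bar>Q t z a\<bar> \<le> B" for t z a
    using discount by (intro abs_qlearn_le) auto
  then have "\<bar>Q t z a - Qs z a\<bar> \<le> B + (\<Sum>z\<in>UNIV. \<Sum>a\<in>UNIV. \<bar>Qs z a\<bar>)" for t z a
    using abs_le_sum_sum_abs[of Qs z a] by (intro order_trans[OF abs_triangle_ineq4 add_mono])
  then show ?thesis
    using that by (meson abs_ge_zero order_trans)
qed

lemma eventually_abs_qlearn_error_le_power:
  assumes "0 \<le> D" and D: "\<And>t z a. \<bar>Q t z a - Qs z a\<bar> \<le> D" and "0 < e"
  shows "\<exists>T. \<forall>t\<ge>T. \<forall>z a. \<bar>Q t z a - Qs z a\<bar> \<le> \<gamma> ^ k * D + e"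
proof (induction k)
  case 0
  have "\<bar>Q t z a - Qs z a\<bar> \<le> D + e" for t z a
    using D[of t z a] \<open>0 < e\<close> by linarith
  then show ?case
    by auto
next
  case (Suc k)
  then obtain T where T: "\<And>t z a. T \<le> t \<Longrightarrow> \<bar>Q t z a - Qs z a\<bar> \<le> \<gamma> ^ k * D + e"
    by blast
  have "\<forall>\<^sub>F t in sequentially. \<forall>z a. \<bar>Q t z a - Qs z a\<bar> \<le> \<gamma> * (\<gamma> ^ k * D + e) + (1 - \<gamma>) * e"
    using discount \<open>0 \<le> D\<close> \<open>0 < e\<close>
    by (intro eventually_all_finite eventually_abs_qlearn_error_le T) auto
  moreover have "\<gamma> * (\<gamma> ^ k * D + e) + (1 - \<gamma>) * e = \<gamma> ^ Suc k * D + e"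
    by (simp add: algebra_simps)
  ultimately show ?case
    unfolding eventually_sequentially by auto
qed

lemma qlearn_tendsto:
  assumes "\<And>s a. \<bar>r s a\<bar> \<le> R"
  shows "(\<lambda>t. Q t z a) \<longlonglongrightarrow> Qs z a"
proof (rule LIMSEQ_I)
  fix \<epsilon> :: real assume "0 < \<epsilon>"
  obtain D where "0 \<le> D" and D: "\<And>t z a. \<bar>Q t z a - Qs z a\<bar> \<le> D"
    using abs_qlearn_error_bounded[OF assms] by blast
  have "(\<lambda>k. \<gamma> ^ k * D) \<longlonglongrightarrow> 0 * D"
    using discount by (intro tendsto_mult LIMSEQ_realpow_zero tendsto_const)
  then have "\<forall>\<^sub>F k in sequentially. \<bar>\<gamma> ^ k * D\<bar> < \<epsilon> / 2"
    using \<open>0 < \<epsilon>\<close> by (auto dest: tendstoD[of _ 0 _ "\<epsilon> / 2"] simp: dist_real_def)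
  then obtain k where k: "\<bar>\<gamma> ^ k * D\<bar> < \<epsilon> / 2"
    unfolding eventually_sequentially by (meson order_refl)
  obtain T where T: "\<forall>t\<ge>T. \<forall>z a. \<bar>Q t z a - Qs z a\<bar> \<le> \<gamma> ^ k * D + \<epsilon> / 2"
    using eventually_abs_qlearn_error_le_power[OF \<open>0 \<le> D\<close> D, of "\<epsilon> / 2" k] \<open>0 < \<epsilon>\<close> by auto
  have "norm (Q t z a - Qs z a) < \<epsilon>" if "T \<le> t" for t
  proof -
    have "\<bar>Q t z a - Qs z a\<bar> \<le> \<gamma> ^ k * D + \<epsilon> / 2"
      using T that by blast
    then show ?thesis
      using k by simp
  qed
  then show "\<exists>T. \<forall>t\<ge>T. norm (Q t z a - Qs z a) < \<epsilon>"
    by blast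
qed

end


section \<open>Stationary averages of the agent-state chain\<close>

lemma sum_pmf_mult_eq_expectation:
  fixes \<mu> :: "'b::finite pmf"
  shows "(\<Sum>q\<in>UNIV. pmf \<mu> q * g q) = measure_pmf.expectation \<mu> g"
  by (subst integral_measure_pmf_real[of UNIV]) (auto simp: mult.commute)

lemma sum_pmf_map_pmf:
  fixes p :: "'b::finite pmf" and h :: "'b \<Rightarrow> 'c::finite"
  shows "(\<Sum>q\<in>UNIV. pmf (map_pmf h p) q * g q) = (\<Sum>v\<in>UNIV. pmf p v * g (h v))"
  by (simp add: sum_pmf_mult_eq_expectation)

lemma sum_pmf_bind_pmf:
  fixes N :: "'b::finite pmf" and F :: "'b \<Rightarrow> 'c::finite pmf"
  shows "(\<Sum>q\<in>UNIV. pmf (bind_pmf N F) q * g q) = (\<Sum>v\<in>UNIV. pmf N v * (\<Sum>q\<in>UNIV. pmf (F v) q * g q))"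
proof -
  have "pmf (bind_pmf N F) q = (\<Sum>v\<in>UNIV. pmf (F v) q * pmf N v)" for q
    unfolding pmf_bind by (rule integral_measure_pmf_real) auto
  then have "(\<Sum>q\<in>UNIV. pmf (bind_pmf N F) q * g q) = (\<Sum>q\<in>UNIV. \<Sum>v\<in>UNIV. pmf N v * (pmf (F v) q * g q))"
    by (simp add: sum_distrib_right sum_distrib_left mult_ac)
  also have "\<dots> = (\<Sum>v\<in>UNIV. \<Sum>q\<in>UNIV. pmf N v * (pmf (F v) q * g q))"
    by (rule sum.swap)
  finally show ?thesis
    by (simp add: sum_distrib_left)
qed

lemma sum_pmf_eq_1_UNIV: "(\<Sum>q\<in>UNIV. pmf (\<mu> :: 'b::finite pmf) q) = 1"
  by (rule sum_pmf_eq_1) auto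

lemma sum_pmf_chain_kernel:
  fixes P :: "'s::finite \<Rightarrow> 'a::finite \<Rightarrow> 's pmf" and Obs :: "'s \<Rightarrow> 'a \<Rightarrow> 'y::finite pmf"
    and f :: "'z::finite \<Rightarrow> 'y \<Rightarrow> 'a \<Rightarrow> 'z"
  shows "(\<Sum>q\<in>UNIV. pmf (chain_kernel P Obs f pol (s, y, z, a)) q * g q) =
    (\<Sum>s'\<in>UNIV. pmf (P s a) s' * (\<Sum>y'\<in>UNIV. pmf (Obs s' a) y' *
       (\<Sum>a'\<in>UNIV. pmf (pol (f z y' a)) a' * g (s', y', f z y' a, a'))))"
  unfolding chain_kernel_def by (simp add: sum_pmf_bind_pmf sum_pmf_map_pmf)

lemma sum_UNIV_restrict_za:
  fixes g :: "'s::finite \<times> 'y::finite \<times> 'z::finite \<times> 'a::finite \<Rightarrow> real"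
  shows "(\<Sum>p\<in>UNIV. if fst (snd (snd p)) = z \<and> snd (snd (snd p)) = a then g p else 0) =
         (\<Sum>s\<in>UNIV. \<Sum>y\<in>UNIV. g (s, y, z, a))"
proof -
  have U: "(UNIV :: ('s \<times> 'y \<times> 'z \<times> 'a) set) = UNIV \<times> (UNIV \<times> (UNIV \<times> UNIV))"
    by simp
  have "(\<Sum>p\<in>UNIV. G p) = (\<Sum>s\<in>UNIV. \<Sum>y\<in>UNIV. \<Sum>z\<in>UNIV. \<Sum>a\<in>UNIV. G (s, y, z, a))"
    for G :: "'s \<times> 'y \<times> 'z \<times> 'a \<Rightarrow> real"
    unfolding U by (simp add: sum.cartesian_product split_def)
  then have "(\<Sum>p\<in>UNIV. if fst (snd (snd p)) = z \<and> snd (snd (snd p)) = a then g p else 0) =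
     (\<Sum>s\<in>UNIV. \<Sum>y\<in>UNIV. \<Sum>z'\<in>UNIV. \<Sum>a'\<in>UNIV. if z' = z \<and> a' = a then g (s, y, z', a') else 0)"
    by simp
  also have "\<dots> = (\<Sum>s\<in>UNIV. \<Sum>y\<in>UNIV. g (s, y, z, a))"
  proof (intro sum.cong refl)
    fix s y
    have "(\<Sum>z'\<in>UNIV. \<Sum>a'\<in>UNIV. if z' = z \<and> a' = a then g (s, y, z', a') else 0) =
          (\<Sum>z'\<in>UNIV. if z' = z then g (s, y, z', a) else 0)"
      by (rule sum.cong) (auto simp: sum.delta)
    then show "(\<Sum>z'\<in>UNIV. \<Sum>a'\<in>UNIV. if z' = z \<and> a' = a then g (s, y, z', a') else 0) = g (s, y, z, a)"
      by (simp add: sum.delta)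
  qed
  finally show ?thesis .
qed

definition za_prob :: "('s::finite \<times> 'y::finite \<times> 'z \<times> 'a) pmf \<Rightarrow> 'z \<Rightarrow> 'a \<Rightarrow> real" where
  "za_prob \<xi> z a = (\<Sum>s\<in>UNIV. \<Sum>y\<in>UNIV. pmf \<xi> (s, y, z, a))"

lemma za_prob_pos: "(\<And>p. 0 < pmf \<xi> p) \<Longrightarrow> 0 < za_prob \<xi> z a"
  unfolding za_prob_def by (intro sum_pos) auto

lemma za_prob_mult_cond_s:
  "0 < za_prob \<xi> z a \<Longrightarrow> za_prob \<xi> z a * cond_s \<xi> s z a = (\<Sum>y\<in>UNIV. pmf \<xi> (s, y, z, a))"
  unfolding cond_s_def za_prob_def by simp

context
  fixes P :: "'s::finite \<Rightarrow> 'a::finite \<Rightarrow> 's pmf" and Obs :: "'s \<Rightarrow> 'a \<Rightarrow> 'y::finite pmf"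
    and f :: "'z::finite \<Rightarrow> 'y \<Rightarrow> 'a \<Rightarrow> 'z" and pol :: "'z \<Rightarrow> 'a pmf"
    and \<xi> :: "('s \<times> 'y \<times> 'z \<times> 'a) pmf"
  assumes positive: "\<And>p. 0 < pmf \<xi> p"
begin

lemma stationary_mean_za:
  fixes \<phi> :: "'s \<Rightarrow> real"
  shows "(\<Sum>x0\<in>UNIV. \<Sum>y0\<in>UNIV. pmf \<xi> x0 * pmf (chain_kernel P Obs f pol x0) y0 *
           ((if fst (snd (snd x0)) = z \<and> snd (snd (snd x0)) = a then 1 else 0) * \<phi> (fst x0))) =
         za_prob \<xi> z a * (\<Sum>s\<in>UNIV. \<phi> s * cond_s \<xi> s z a)"
proof -
  have "(\<Sum>x0\<in>UNIV. \<Sum>y0\<in>UNIV. pmf \<xi> x0 * pmf (chain_kernel P Obs f pol x0) y0 *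
           ((if fst (snd (snd x0)) = z \<and> snd (snd (snd x0)) = a then 1 else 0) * \<phi> (fst x0))) =
        (\<Sum>x0\<in>UNIV. if fst (snd (snd x0)) = z \<and> snd (snd (snd x0)) = a then pmf \<xi> x0 * \<phi> (fst x0) else 0)"
    by (rule sum.cong) (auto simp: sum_pmf_eq_1_UNIV simp flip: sum_distrib_left sum_distrib_right)
  also have "\<dots> = (\<Sum>s\<in>UNIV. (\<Sum>y\<in>UNIV. pmf \<xi> (s, y, z, a)) * \<phi> s)"
    by (simp add: sum_UNIV_restrict_za sum_distrib_right)
  also have "\<dots> = za_prob \<xi> z a * (\<Sum>s\<in>UNIV. \<phi> s * cond_s \<xi> s z a)"
    using za_prob_mult_cond_s[OF za_prob_pos[OF positive]]
    by (simp add: sum_distrib_left mult_ac)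
  finally show ?thesis .
qed

lemma stationary_mean_za_next:
  "(\<Sum>x0\<in>UNIV. \<Sum>y0\<in>UNIV. pmf \<xi> x0 * pmf (chain_kernel P Obs f pol x0) y0 *
      ((if fst (snd (snd x0)) = z \<and> snd (snd (snd x0)) = a then 1 else 0) *
       (if z' = fst (snd (snd y0)) then 1 else 0))) =
   za_prob \<xi> z a * P_xi P Obs f \<xi> z' z a"
proof -
  define next_prob where "next_prob s = (\<Sum>s'\<in>UNIV. pmf (P s a) s' *
    (\<Sum>y'\<in>UNIV. pmf (Obs s' a) y' * (if z' = f z y' a then 1 else (0::real))))" for s
  have "(\<Sum>y0\<in>UNIV. pmf (chain_kernel P Obs f pol (s, y, z, a)) y0 * (if z' = fst (snd (snd y0)) then 1 else 0)) =
        next_prob s" for s y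
    unfolding next_prob_def sum_pmf_chain_kernel
    by (simp add: sum_distrib_right[symmetric] sum_pmf_eq_1_UNIV)
  moreover have "(\<Sum>x0\<in>UNIV. \<Sum>y0\<in>UNIV. pmf \<xi> x0 * pmf (chain_kernel P Obs f pol x0) y0 *
      ((if fst (snd (snd x0)) = z \<and> snd (snd (snd x0)) = a then 1 else 0) *
       (if z' = fst (snd (snd y0)) then 1 else 0))) =
    (\<Sum>p\<in>UNIV. if fst (snd (snd p)) = z \<and> snd (snd (snd p)) = a then
       pmf \<xi> p * (\<Sum>y0\<in>UNIV. pmf (chain_kernel P Obs f pol p) y0 * (if z' = fst (snd (snd y0)) then 1 else 0))
     else 0)"
    by (rule sum.cong) (auto simp: sum_distrib_left mult_ac)
  ultimately have "(\<Sum>x0\<in>UNIV. \<Sum>y0\<in>UNIV. pmf \<xi> x0 * pmf (chain_kernel P Obs f pol x0) y0 *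
      ((if fst (snd (snd x0)) = z \<and> snd (snd (snd x0)) = a then 1 else 0) *
       (if z' = fst (snd (snd y0)) then 1 else 0))) =
    (\<Sum>s\<in>UNIV. \<Sum>y\<in>UNIV. pmf \<xi> (s, y, z, a) * next_prob s)"
    by (simp add: sum_UNIV_restrict_za)
  also have "\<dots> = za_prob \<xi> z a * P_xi P Obs f \<xi> z' z a"
  proof -
    have "za_prob \<xi> z a * P_xi P Obs f \<xi> z' z a = (\<Sum>s\<in>UNIV. (za_prob \<xi> z a * cond_s \<xi> s z a) * next_prob s)"
      unfolding P_xi_def next_prob_def by (simp add: sum_distrib_left mult_ac)
    also have "\<dots> = (\<Sum>s\<in>UNIV. (\<Sum>y\<in>UNIV. pmf \<xi> (s, y, z, a)) * next_prob s)"
      using za_prob_mult_cond_s[OF za_prob_pos[OF positive]] by simp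
    finally show ?thesis
      by (simp add: sum_distrib_right)
  qed
  finally show ?thesis .
qed

end

lemma sum_cond_s_eq_1:
  assumes "0 < za_prob \<xi> z a"
  shows "(\<Sum>s\<in>UNIV. cond_s \<xi> s z a) = 1"
proof -
  have "za_prob \<xi> z a * (\<Sum>s\<in>UNIV. cond_s \<xi> s z a) = za_prob \<xi> z a"
    using za_prob_mult_cond_s[OF assms] by (simp add: sum_distrib_left za_prob_def)
  then show ?thesis
    using assms by simp
qed

lemma qlearning_trajectory_if_ergodic:
  fixes P :: "'s::finite \<Rightarrow> 'a::finite \<Rightarrow> 's pmf" and Obs :: "'s \<Rightarrow> 'a \<Rightarrow> 'y::finite pmf"
    and f :: "'z::finite \<Rightarrow> 'y \<Rightarrow> 'a \<Rightarrow> 'z" and x :: "nat \<Rightarrow> 's \<times> 'y \<times> 'z \<times> 'a"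
    and r :: "'s \<Rightarrow> 'a \<Rightarrow> real"
  assumes discount: "0 \<le> \<gamma>" "\<gamma> < 1"
    and fixpoint: "\<And>z a. Qs z a = r_xi r \<xi> z a + \<gamma> * (\<Sum>z'\<in>UNIV. P_xi P Obs f \<xi> z' z a * max_q Qs z')"
    and positive: "\<And>p. 0 < pmf \<xi> p"
    and ergodic: "\<And>h. (\<lambda>n. (\<Sum>\<tau><n. h (x \<tau>) (x (Suc \<tau>))) / real n) \<longlonglongrightarrow>
      (\<Sum>x0\<in>UNIV. \<Sum>y0\<in>UNIV. pmf \<xi> x0 * pmf (chain_kernel P Obs f pol x0) y0 * h x0 y0)"
  shows "qlearning_trajectory x r \<gamma> Qs (r_xi r \<xi>) (za_prob \<xi>) (P_xi P Obs f \<xi>)"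
proof -
  define at_za where "at_za z a p = (if fst (snd (snd p)) = z \<and> snd (snd (snd p)) = a then 1 else (0::real))"
    for z a and p :: "'s \<times> 'y \<times> 'z \<times> 'a"
  have visit_eq: "visit x \<tau> z a = at_za z a (x \<tau>)" for \<tau> z a
    by (simp add: at_za_def visit_def trZ_def trA_def)
  have mean_za: "(\<Sum>x0\<in>UNIV. \<Sum>y0\<in>UNIV. pmf \<xi> x0 * pmf (chain_kernel P Obs f pol x0) y0 *
      (at_za z a x0 * \<phi> (fst x0))) = za_prob \<xi> z a * (\<Sum>s\<in>UNIV. \<phi> s * cond_s \<xi> s z a)" for z a \<phi>
    unfolding at_za_def by (rule stationary_mean_za[OF positive])
  show ?thesis
  proof
    show "(\<lambda>t. visit_count x t z a / t) \<longlonglongrightarrow> za_prob \<xi> z a" for z a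
      using ergodic[of "\<lambda>p q. at_za z a p * 1"] sum_cond_s_eq_1[OF za_prob_pos[OF positive]]
      by (simp add: visit_count_def visit_eq mean_za[of z a "\<lambda>_. 1", simplified])
    show "(\<lambda>t. (\<Sum>\<tau><t. visit x \<tau> z a * r (trS x \<tau>) (trA x \<tau>)) / t) \<longlonglongrightarrow> za_prob \<xi> z a * r_xi r \<xi> z a"
      for z a
    proof -
      have "visit x \<tau> z a * r (trS x \<tau>) (trA x \<tau>) = at_za z a (x \<tau>) * r (fst (x \<tau>)) a" for \<tau>
        by (simp add: at_za_def visit_def trS_def trZ_def trA_def)
      then show ?thesis
        using ergodic[of "\<lambda>p q. at_za z a p * r (fst p) a"] mean_za[of z a "\<lambda>s. r s a"]
        by (simp add: r_xi_def)
    qed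
    show "(\<lambda>t. (\<Sum>\<tau><t. visit x \<tau> z a * (if trZ x (Suc \<tau>) = z' then 1 else 0)) / t) \<longlonglongrightarrow>
          za_prob \<xi> z a * P_xi P Obs f \<xi> z' z a" for z a z'
    proof -
      have "visit x \<tau> z a * (if trZ x (Suc \<tau>) = z' then 1 else 0) =
            at_za z a (x \<tau>) * (if z' = fst (snd (snd (x (Suc \<tau>)))) then 1 else 0)" for \<tau>
        by (auto simp: at_za_def visit_def trZ_def trA_def)
      then show ?thesis
        using ergodic[of "\<lambda>p q. at_za z a p * (if z' = fst (snd (snd q)) then 1 else 0)"]
        by (simp add: at_za_def stationary_mean_za_next[OF positive])
    qed
  qed (rule discount fixpoint za_prob_pos[OF positive])+
qed

theorem theorem2:
  fixes P :: "'s::finite \<Rightarrow> 'a::finite \<Rightarrow> 's pmf"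
    and Obs :: "'s \<Rightarrow> 'a \<Rightarrow> 'y::finite pmf"
    and r :: "'s \<Rightarrow> 'a \<Rightarrow> real"
    and \<gamma> :: real
    and f :: "'z::finite \<Rightarrow> 'y \<Rightarrow> 'a \<Rightarrow> 'z"
    and pol :: "'z \<Rightarrow> 'a pmf"
    and \<xi> :: "('s \<times> 'y \<times> 'z \<times> 'a) pmf"
    and mu0 :: "('s \<times> 'y \<times> 'z \<times> 'a) pmf"
    and M :: "'m measure"
    and X :: "nat \<Rightarrow> 'm \<Rightarrow> 's \<times> 'y \<times> 'z \<times> 'a"
    and Q0 Qs :: "'z \<Rightarrow> 'a \<Rightarrow> real"
    and sel :: "'a set \<Rightarrow> 'a"
  assumes "0 \<le> \<gamma>" and "\<gamma> < 1"
    and "bind_pmf \<xi> (chain_kernel P Obs f pol) = \<xi>"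
    and "\<forall>\<nu>. bind_pmf \<nu> (chain_kernel P Obs f pol) = \<nu> \<longrightarrow> \<nu> = \<xi>"
    and "\<forall>x. pmf \<xi> x > 0"
    and "prob_space M"
    and "\<forall>i. X i \<in> measurable M (count_space UNIV)"
    and "\<forall>n xs. measure M {\<omega> \<in> space M. \<forall>i\<le>n. X i \<omega> = xs i} =
               pmf mu0 (xs 0) * (\<Prod>i<n. pmf (chain_kernel P Obs f pol (xs i)) (xs (Suc i)))"
    and "\<forall>z a. Qs z a = r_xi r \<xi> z a + \<gamma> * (\<Sum>z'\<in>UNIV. P_xi P Obs f \<xi> z' z a * max_q Qs z')"
    and "\<forall>A. A \<noteq> {} \<longrightarrow> sel A \<in> A"
  shows "AE \<omega> in M.
           (\<forall>z a. (\<lambda>t. qlearn r \<gamma> Q0 (\<lambda>i. X i \<omega>) t z a) \<longlonglongrightarrow> Qs z a) \<and>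
           (\<forall>z. (\<exists>!a. Qs z a = max_q Qs z) \<longrightarrow>
              (\<forall>\<^sub>F t in sequentially. greedy sel (qlearn r \<gamma> Q0 (\<lambda>i. X i \<omega>) t) z = greedy sel Qs z))"
proof -
  interpret finite_markov_chain M X "chain_kernel P Obs f pol" mu0
    using assms(6-8) by (simp add: finite_markov_chain_def finite_markov_chain_axioms_def)
  have "AE \<omega> in M. \<forall>h. (\<lambda>n. (\<Sum>\<tau><n. h (X \<tau> \<omega>) (X (Suc \<tau>) \<omega>)) / n) \<longlonglongrightarrow>
      (\<Sum>x0\<in>UNIV. \<Sum>y0\<in>UNIV. pmf \<xi> x0 * pmf (chain_kernel P Obs f pol x0) y0 * h x0 y0)"
    using assms(4) by (intro AE_pair_average_tendsto) blast
  then show ?thesis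
  proof eventually_elim
    case (elim \<omega>)
    interpret qlearning_trajectory "\<lambda>i. X i \<omega>" r \<gamma> Q0 Qs "r_xi r \<xi>" "za_prob \<xi>" "P_xi P Obs f \<xi>"
      using assms(1,2) assms(9)[rule_format] assms(5)[rule_format] elim[rule_format]
      by (rule qlearning_trajectory_if_ergodic)
    have "(\<lambda>t. qlearn r \<gamma> Q0 (\<lambda>i. X i \<omega>) t z a) \<longlonglongrightarrow> Qs z a" for z a
      using abs_le_sum_sum_abs[of r] by (rule qlearn_tendsto)
    then show ?case
      by (blast intro: eventually_greedy_eq)
  qed
qed

end
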